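(* Let $f:\{0,1\}^n\times\{0,1\}^n\to\{0,1\}$ be a Boolean function and $d\ge1$. If there is a quantum protocol for $f$ with communication $c$ and error $1/3$, then there are a real $\alpha\in[0,1]$ and a set of $2^{O(dc)}$ rectangles $R_i$ with weights $w_i\in\{-\alpha,\alpha\}$ such that for all $(x,y)$: \[\sum_i w_iR_i[x,y]\in\begin{cases}[1-2^{-d},1]&\text{if } f(x,y)=1,\\ [0,2^{-d}]&\text{if } f(x,y)=0.\end{cases}\]
   Context: A rectangle is a set $A\times B$ with $A,B\subseteq\{0,1\}^n$; $R_i[x,y]$ denotes its characteristic function. Quantum communication model (Yao, no prior entanglement): Alice receives $x$, Bob $y$; each holds private qubits initialized to the input and $|0\rangle$; in each round one player applies a unitary to his qubits and sends one qubit; at the end a qubit is measured giving the output; communication is the number of qubits exchanged; error $1/3$ means the output equals $f(x,y)$ with probability at least $2/3$ on every input. The constant in $O$ is absolute. *)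

theory Defs
  imports Complex_Main
begin

text \<open>Computational basis states of a register of qubits indexed by naturals:
  a basis state is an assignment nat => bool (qubits outside the register are False).\<close>
type_synonym basis = "nat \<Rightarrow> bool"

definition local_basis :: "nat set \<Rightarrow> basis set" where
  "local_basis S = {w. \<forall>i. i \<notin> S \<longrightarrow> \<not> w i}"

definition restr :: "basis \<Rightarrow> nat set \<Rightarrow> basis" where
  "restr z S = (\<lambda>i. i \<in> S \<and> z i)"

definition merge :: "basis \<Rightarrow> basis \<Rightarrow> nat set \<Rightarrow> basis" where
  "merge z w S = (\<lambda>i. if i \<in> S then w i else z i)"

text \<open>Apply an operator U (a matrix indexed by basis states of the qubits in S)
  to the qubits in S of the global state psi, i.e. (U tensor Id) psi.\<close>
definition apply_local ::
  "nat set \<Rightarrow> (basis \<Rightarrow> basis \<Rightarrow> complex) \<Rightarrow> (basis \<Rightarrow> complex) \<Rightarrow> basis \<Rightarrow> complex" where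
  "apply_local S U \<psi> z = (\<Sum>w\<in>local_basis S. U (restr z S) w * \<psi> (merge z w S))"

definition unitary_on :: "nat set \<Rightarrow> (basis \<Rightarrow> basis \<Rightarrow> complex) \<Rightarrow> bool" where
  "unitary_on S U \<longleftrightarrow> finite S \<and>
     (\<forall>v\<in>local_basis S. \<forall>w\<in>local_basis S.
        (\<Sum>u\<in>local_basis S. cnj (U u v) * U u w) = (if v = w then 1 else 0))"

text \<open>A round: (sender, unitary, sent qubit). Sender True = Alice, False = Bob.
  The sender applies the unitary to all qubits he currently holds, then sends
  one of them to the other player. OA is the set of qubits held by Alice;
  Bob holds the remaining qubits among 0..<N.\<close>
type_synonym round = "bool \<times> (basis \<Rightarrow> basis \<Rightarrow> complex) \<times> nat"

definition owned :: "nat \<Rightarrow> nat set \<Rightarrow> bool \<Rightarrow> nat set" where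
  "owned N OA p = (if p then OA else {0..<N} - OA)"

definition transfer :: "nat set \<Rightarrow> bool \<Rightarrow> nat \<Rightarrow> nat set" where
  "transfer OA p q = (if p then OA - {q} else OA \<union> {q})"

fun valid_rounds :: "nat \<Rightarrow> nat set \<Rightarrow> round list \<Rightarrow> bool" where
  "valid_rounds N OA [] = True"
| "valid_rounds N OA ((p, U, q) # rs) \<longleftrightarrow>
     q \<in> owned N OA p \<and> unitary_on (owned N OA p) U \<and> valid_rounds N (transfer OA p q) rs"

fun run :: "nat \<Rightarrow> nat set \<Rightarrow> round list \<Rightarrow> (basis \<Rightarrow> complex) \<Rightarrow> (basis \<Rightarrow> complex)" where
  "run N OA [] \<psi> = \<psi>"
| "run N OA ((p, U, q) # rs) \<psi> = run N (transfer OA p q) rs (apply_local (owned N OA p) U \<psi>)"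

text \<open>Initial basis state: Alice's qubits are 0..<ka, holding x in 0..<n and |0> elsewhere;
  Bob's qubits are ka..<N, holding y in ka..<ka+n and |0> elsewhere.\<close>
definition init_basis :: "nat \<Rightarrow> nat \<Rightarrow> bool list \<Rightarrow> bool list \<Rightarrow> basis" where
  "init_basis n ka x y = (\<lambda>i. (i < n \<and> x ! i) \<or> (ka \<le> i \<and> i < ka + n \<and> y ! (i - ka)))"

definition init_state :: "nat \<Rightarrow> nat \<Rightarrow> bool list \<Rightarrow> bool list \<Rightarrow> basis \<Rightarrow> complex" where
  "init_state n ka x y = (\<lambda>z. if z = init_basis n ka x y then 1 else 0)"

definition prob_one :: "nat \<Rightarrow> nat \<Rightarrow> nat \<Rightarrow> round list \<Rightarrow> nat \<Rightarrow> bool list \<Rightarrow> bool list \<Rightarrow> real" where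
  "prob_one n N ka rs q x y =
     (\<Sum>z\<in>local_basis {0..<N}. if z q then (cmod (run N {0..<ka} rs (init_state n ka x y) z))\<^sup>2 else 0)"

text \<open>A quantum protocol (Yao model, no prior entanglement) on n-bit inputs with
  N qubits in total, Alice initially holding qubits 0..<ka, rounds rs, and output qubit q.\<close>
definition qprotocol :: "nat \<Rightarrow> nat \<Rightarrow> nat \<Rightarrow> round list \<Rightarrow> nat \<Rightarrow> bool" where
  "qprotocol n N ka rs q \<longleftrightarrow> n \<le> ka \<and> ka + n \<le> N \<and> q < N \<and> valid_rounds N {0..<ka} rs"

definition computes_13 ::
  "nat \<Rightarrow> nat \<Rightarrow> nat \<Rightarrow> round list \<Rightarrow> nat \<Rightarrow> (bool list \<Rightarrow> bool list \<Rightarrow> bool) \<Rightarrow> bool" where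
  "computes_13 n N ka rs q f \<longleftrightarrow>
     (\<forall>x y. length x = n \<longrightarrow> length y = n \<longrightarrow>
        (if f x y then prob_one n N ka rs q x y \<ge> 2/3 else prob_one n N ka rs q x y \<le> 1/3))"

definition is_rectangle :: "nat \<Rightarrow> (bool list \<times> bool list) set \<Rightarrow> bool" where
  "is_rectangle n R \<longleftrightarrow> (\<exists>A B. A \<subseteq> {xs. length xs = n} \<and> B \<subseteq> {xs. length xs = n} \<and> R = A \<times> B)"

end

theory Submission
  imports Defs
begin

(* After k rounds the joint state is a sum over the 2^k values m of the sent qubits of
   products a_m(x) (tensor) b_m(y) of an Alice vector and a Bob vector of norm at most 1: a local
   unitary acts on one factor only, and sending a qubit turns its value into a new bit of m.
   Hence the acceptance probability P(x, y) is a sum of 2 * 4^c products of [-1, 1]-valued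
   functions of x and of y. Majority amplification over 12(d + 2) runs is a polynomial in P,
   so the (slightly shifted) amplified probability is still such a sum, with 2^O(dc) terms,
   and it is within 2^-d of f. Rounding every factor to a multiple of 1/L writes it as a
   signed sum of L threshold indicators, which turns the sum into a combination of
   2^O(dc) rectangles with weights +-1/L^2. Coinciding rectangles are finally split along a
   fresh column so that all rectangles are distinct; when n is too small for that, the 4^n
   singleton rectangles represent f exactly. *)

section \<open>Product bases of disjoint registers\<close>

definition join_basis :: "basis \<Rightarrow> basis \<Rightarrow> basis" where
  "join_basis u v = (\<lambda>i. u i \<or> v i)"

definition sqnorm :: "nat set \<Rightarrow> (basis \<Rightarrow> complex) \<Rightarrow> real" where
  "sqnorm S g = (\<Sum>u\<in>local_basis S. (cmod (g u))\<^sup>2)"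

lemma local_basis_eq_image_Pow: "local_basis S = (\<lambda>A i. i \<in> A) ` Pow S"
proof (rule set_eqI, rule iffI)
  fix w assume "w \<in> local_basis S"
  then have "w = (\<lambda>i. i \<in> {i. w i})" "{i. w i} \<subseteq> S" by (auto simp: local_basis_def)
  then show "w \<in> (\<lambda>A i. i \<in> A) ` Pow S" by blast
qed (auto simp: local_basis_def)

lemma finite_local_basis: "finite S \<Longrightarrow> finite (local_basis S)"
  by (simp add: local_basis_eq_image_Pow)

lemma restr_in_local_basis: "restr z S \<in> local_basis S"
  by (simp add: restr_def local_basis_def)

lemma join_basis_in_local_basis:
  "u \<in> local_basis S \<Longrightarrow> v \<in> local_basis T \<Longrightarrow> join_basis u v \<in> local_basis (S \<union> T)"
  by (auto simp: join_basis_def local_basis_def)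

lemma restr_join_basis:
  assumes "S \<inter> T = {}" "u \<in> local_basis S" "v \<in> local_basis T"
  shows "restr (join_basis u v) S = u" "restr (join_basis u v) T = v"
  using assms by (auto simp: restr_def join_basis_def local_basis_def fun_eq_iff)

lemma join_basis_restr: "z \<in> local_basis (S \<union> T) \<Longrightarrow> join_basis (restr z S) (restr z T) = z"
  by (auto simp: restr_def join_basis_def local_basis_def fun_eq_iff)

lemma eq_join_basis_iff:
  assumes "S \<subseteq> \<Omega>" "z \<in> local_basis \<Omega>" "u \<in> local_basis S" "v \<in> local_basis (\<Omega> - S)"
  shows "z = join_basis u v \<longleftrightarrow> restr z S = u \<and> restr z (\<Omega> - S) = v"
proof -
  have "join_basis (restr z S) (restr z (\<Omega> - S)) = z"
    using assms(1,2) by (simp add: join_basis_restr Un_absorb1)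
  then show ?thesis using restr_join_basis[OF _ assms(3,4)] by auto
qed

lemma merge_eq_join_basis:
  "S \<subseteq> \<Omega> \<Longrightarrow> z \<in> local_basis \<Omega> \<Longrightarrow> w \<in> local_basis S \<Longrightarrow>
   merge z w S = join_basis w (restr z (\<Omega> - S))"
  by (auto simp: merge_def join_basis_def restr_def local_basis_def fun_eq_iff)

lemma sum_local_basis_Un:
  assumes "S \<inter> T = {}"
  shows "(\<Sum>z\<in>local_basis (S \<union> T). F z) = (\<Sum>u\<in>local_basis S. \<Sum>v\<in>local_basis T. F (join_basis u v))"
proof -
  have "bij_betw (\<lambda>(u, v). join_basis u v) (local_basis S \<times> local_basis T) (local_basis (S \<union> T))"
    by (rule bij_betw_byWitness[where f'="\<lambda>z. (restr z S, restr z T)"])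
       (auto simp: restr_join_basis[OF assms] join_basis_restr join_basis_in_local_basis
          restr_in_local_basis)
  then have "(\<Sum>z\<in>local_basis (S \<union> T). F z) = (\<Sum>(u, v)\<in>local_basis S \<times> local_basis T. F (join_basis u v))"
    by (simp add: sum.reindex_bij_betw[symmetric] case_prod_beta')
  then show ?thesis by (simp add: sum.cartesian_product)
qed

lemma sum_local_basis_split:
  assumes "S \<subseteq> \<Omega>"
  shows "(\<Sum>z\<in>local_basis \<Omega>. F z) = (\<Sum>u\<in>local_basis S. \<Sum>v\<in>local_basis (\<Omega> - S). F (join_basis u v))"
proof -
  have "\<Omega> = S \<union> (\<Omega> - S)" using assms by blast
  then show ?thesis using sum_local_basis_Un[of S "\<Omega> - S" F] by simp
qed

lemma apply_local_join_basis:
  assumes "S \<subseteq> \<Omega>" "u \<in> local_basis S" "v \<in> local_basis (\<Omega> - S)"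
  shows "apply_local S U \<psi> (join_basis u v) = (\<Sum>w\<in>local_basis S. U u w * \<psi> (join_basis w v))"
proof -
  have "join_basis u v \<in> local_basis (S \<union> (\<Omega> - S))" by (rule join_basis_in_local_basis[OF assms(2,3)])
  then have z: "join_basis u v \<in> local_basis \<Omega>" using assms(1) by (simp add: Un_absorb1)
  show ?thesis unfolding apply_local_def
    using merge_eq_join_basis[OF assms(1) z] restr_join_basis[OF _ assms(2,3)] by simp
qed

lemma product_sum_at_join_basis:
  assumes "S \<subseteq> \<Omega>" "u \<in> local_basis S" "v \<in> local_basis (\<Omega> - S)"
    and "\<forall>z\<in>local_basis \<Omega>. \<phi> z = (\<Sum>m\<in>I. a m (restr z S) * b m (restr z (\<Omega> - S)))"
  shows "\<phi> (join_basis u v) = (\<Sum>m\<in>I. a m u * b m v)"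
proof -
  have "join_basis u v \<in> local_basis (S \<union> (\<Omega> - S))" by (rule join_basis_in_local_basis[OF assms(2,3)])
  then have "join_basis u v \<in> local_basis \<Omega>" using assms(1) by (simp add: Un_absorb1)
  then show ?thesis using assms(4) restr_join_basis[OF _ assms(2,3)] by simp
qed

lemma unitary_on_isometry:
  assumes U: "unitary_on S U"
  shows "(\<Sum>u\<in>local_basis S. (cmod (\<Sum>w\<in>local_basis S. U u w * g w))\<^sup>2) = sqnorm S g"
proof -
  let ?B = "local_basis S"
  have fin: "finite ?B" using U by (simp add: unitary_on_def finite_local_basis)
  have orth: "v \<in> ?B \<Longrightarrow> w \<in> ?B \<Longrightarrow> (\<Sum>u\<in>?B. cnj (U u v) * U u w) = (if v = w then 1 else 0)" for v w
    using U by (simp add: unitary_on_def)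
  have "complex_of_real (\<Sum>u\<in>?B. (cmod (\<Sum>w\<in>?B. U u w * g w))\<^sup>2)
     = (\<Sum>u\<in>?B. (\<Sum>w\<in>?B. U u w * g w) * cnj (\<Sum>w\<in>?B. U u w * g w))"
    by (simp only: of_real_sum complex_norm_square)
  also have "\<dots> = (\<Sum>u\<in>?B. \<Sum>v\<in>?B. \<Sum>w\<in>?B. (cnj (U u v) * U u w) * (g w * cnj (g v)))"
    by (simp add: sum_distrib_left sum_distrib_right cnj_sum mult_ac)
  also have "\<dots> = (\<Sum>v\<in>?B. \<Sum>w\<in>?B. \<Sum>u\<in>?B. (cnj (U u v) * U u w) * (g w * cnj (g v)))"
    by (subst sum.swap) (rule sum.cong[OF refl], rule sum.swap)
  also have "\<dots> = (\<Sum>v\<in>?B. \<Sum>w\<in>?B. (if v = w then g w * cnj (g v) else 0))"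
    by (intro sum.cong refl) (simp add: sum_distrib_right[symmetric] orth)
  also have "\<dots> = (\<Sum>w\<in>?B. g w * cnj (g w))"
    using fin by (simp add: sum.delta)
  also have "\<dots> = complex_of_real (sqnorm S g)"
    by (simp only: sqnorm_def of_real_sum complex_norm_square)
  finally show ?thesis using of_real_eq_iff by blast
qed

lemma sqnorm_apply_local:
  assumes "S \<subseteq> \<Omega>" "unitary_on S U"
  shows "sqnorm \<Omega> (apply_local S U \<psi>) = sqnorm \<Omega> \<psi>"
proof -
  let ?A = "local_basis S" and ?B = "local_basis (\<Omega> - S)"
  have "sqnorm \<Omega> (apply_local S U \<psi>)
      = (\<Sum>v\<in>?B. \<Sum>u\<in>?A. (cmod (\<Sum>w\<in>?A. U u w * \<psi> (join_basis w v)))\<^sup>2)"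
    unfolding sqnorm_def sum_local_basis_split[OF assms(1)]
    by (subst sum.swap) (simp add: apply_local_join_basis[OF assms(1)])
  also have "\<dots> = (\<Sum>v\<in>?B. \<Sum>w\<in>?A. (cmod (\<psi> (join_basis w v)))\<^sup>2)"
    by (simp add: unitary_on_isometry[OF assms(2)] sqnorm_def)
  also have "\<dots> = sqnorm \<Omega> \<psi>"
    unfolding sqnorm_def sum_local_basis_split[OF assms(1)] by (rule sum.swap)
  finally show ?thesis .
qed

lemma sqnorm_basis_vector:
  "finite S \<Longrightarrow> w \<in> local_basis S \<Longrightarrow> sqnorm S (\<lambda>u. if u = w then 1 else 0) = 1"
proof -
  assume "finite S" "w \<in> local_basis S"
  moreover have "(cmod (if u = w then 1 else 0))\<^sup>2 = (if u = w then 1 else 0)" for u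
    by simp
  ultimately show ?thesis by (simp add: sqnorm_def finite_local_basis)
qed

lemma sqnorm_fun_upd_le:
  assumes "q \<in> S" "finite S"
  shows "sqnorm (S - {q}) (\<lambda>u. g (u(q := \<beta>))) \<le> sqnorm S g"
proof -
  have inj: "inj_on (\<lambda>u. u(q := \<beta>)) (local_basis (S - {q}))"
    by (rule inj_onI) (auto simp: local_basis_def fun_eq_iff split: if_splits)
  have sub: "(\<lambda>u. u(q := \<beta>)) ` local_basis (S - {q}) \<subseteq> local_basis S"
    using assms(1) by (auto simp: local_basis_def split: if_splits)
  have "sqnorm (S - {q}) (\<lambda>u. g (u(q := \<beta>))) = (\<Sum>u\<in>(\<lambda>u. u(q := \<beta>)) ` local_basis (S - {q}). (cmod (g u))\<^sup>2)"
    unfolding sqnorm_def by (simp add: sum.reindex[OF inj])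
  also have "\<dots> \<le> sqnorm S g"
    unfolding sqnorm_def by (rule sum_mono2[OF finite_local_basis[OF assms(2)] sub]) simp
  finally show ?thesis .
qed

lemma sqnorm_insert_indicator:
  fixes g :: "basis \<Rightarrow> complex"
  assumes "q \<notin> T" "finite T"
  shows "sqnorm (insert q T) (\<lambda>v. (if v q = \<beta> then 1 else 0) * g (v(q := False))) = sqnorm T g"
proof -
  have inj: "inj_on (\<lambda>u. u(q := \<beta>)) (local_basis T)"
    using assms(1) by (intro inj_onI) (auto simp: local_basis_def fun_eq_iff split: if_splits)
  have img: "{v \<in> local_basis (insert q T). v q = \<beta>} = (\<lambda>u. u(q := \<beta>)) ` local_basis T"
  proof (rule set_eqI, rule iffI)
    fix v assume "v \<in> {v \<in> local_basis (insert q T). v q = \<beta>}"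
    then have "v = (v(q := False))(q := \<beta>)" "v(q := False) \<in> local_basis T"
      by (auto simp: local_basis_def fun_eq_iff)
    then show "v \<in> (\<lambda>u. u(q := \<beta>)) ` local_basis T" by blast
  qed (auto simp: local_basis_def)
  have upd: "u(q := False) = u" if "u \<in> local_basis T" for u
    using that assms(1) by (auto simp: local_basis_def fun_eq_iff)
  have "sqnorm (insert q T) (\<lambda>v. (if v q = \<beta> then 1 else 0) * g (v(q := False)))
      = (\<Sum>v\<in>local_basis (insert q T). if v q = \<beta> then (cmod (g (v(q := False))))\<^sup>2 else 0)"
    unfolding sqnorm_def by (intro sum.cong refl) simp
  also have "\<dots> = (\<Sum>v\<in>{v \<in> local_basis (insert q T). v q = \<beta>}. (cmod (g (v(q := False))))\<^sup>2)"
    using finite_local_basis[of "insert q T"] assms(2) by (simp add: sum.inter_filter)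
  also have "\<dots> = sqnorm T g"
    by (simp add: img sum.reindex[OF inj] sqnorm_def) (intro sum.cong refl, simp add: upd)
  finally show ?thesis .
qed

lemma owned_subset: "OA \<subseteq> {0..<N} \<Longrightarrow> owned N OA p \<subseteq> {0..<N}"
  by (auto simp: owned_def)

lemma transfer_subset:
  "OA \<subseteq> {0..<N} \<Longrightarrow> q \<in> owned N OA p \<Longrightarrow> transfer OA p q \<subseteq> {0..<N}"
  by (auto simp: owned_def transfer_def split: if_splits)

lemma sqnorm_run:
  assumes "valid_rounds N OA rs" "OA \<subseteq> {0..<N}"
  shows "sqnorm {0..<N} (run N OA rs \<psi>) = sqnorm {0..<N} \<psi>"
  using assms
proof (induction rs arbitrary: OA \<psi>)
  case (Cons r rs)
  obtain p U q where r: "r = (p, U, q)" by (cases r)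
  with Cons.prems show ?case
    by (simp add: Cons.IH transfer_subset sqnorm_apply_local owned_subset)
qed simp

section \<open>Bipartite decomposition of protocol states\<close>

definition words :: "nat \<Rightarrow> bool list set" where
  "words k = {m. length m = k}"

lemma words_eq_lists: "words k = {m. set m \<subseteq> UNIV \<and> length m = k}"
  by (simp add: words_def)

lemma finite_words: "finite (words k)"
  unfolding words_eq_lists by (rule finite_lists_length_eq) simp

lemma card_words: "card (words k) = 2 ^ k"
  using card_lists_length_eq[of "UNIV :: bool set" k] by (simp add: words_eq_lists)

lemma words_0: "words 0 = {[]}"
  by (auto simp: words_def)

lemma sum_words_Suc: "(\<Sum>m\<in>words (Suc k). F m) = (\<Sum>\<beta>\<in>UNIV. \<Sum>m\<in>words k. F (\<beta> # m))"
proof -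
  have img: "words (Suc k) = (\<lambda>(\<beta>, m). \<beta> # m) ` (UNIV \<times> words k)"
    by (auto simp: words_def image_iff length_Suc_conv)
  have "inj_on (\<lambda>(\<beta>, m). \<beta> # m) (UNIV \<times> words k)" by (auto simp: inj_on_def)
  then show ?thesis
    unfolding img by (simp add: sum.reindex sum.cartesian_product case_prod_beta')
qed

definition bipartite_decomp ::
  "nat set \<Rightarrow> nat set \<Rightarrow> nat \<Rightarrow> ('x \<Rightarrow> 'y \<Rightarrow> basis \<Rightarrow> complex) \<Rightarrow> bool" where
  "bipartite_decomp \<Omega> S k \<psi> \<longleftrightarrow> (\<exists>a b.
     (\<forall>x m. m \<in> words k \<longrightarrow> sqnorm S (a x m) \<le> 1) \<and>
     (\<forall>y m. m \<in> words k \<longrightarrow> sqnorm (\<Omega> - S) (b y m) \<le> 1) \<and>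
     (\<forall>x y. \<forall>z\<in>local_basis \<Omega>. \<psi> x y z = (\<Sum>m\<in>words k. a x m (restr z S) * b y m (restr z (\<Omega> - S)))))"

lemma bipartite_decomp_swap:
  assumes "S \<subseteq> \<Omega>" "bipartite_decomp \<Omega> S k \<psi>"
  shows "bipartite_decomp \<Omega> (\<Omega> - S) k (\<lambda>y x. \<psi> x y)"
proof -
  obtain a b where
    "\<forall>x m. m \<in> words k \<longrightarrow> sqnorm S (a x m) \<le> 1"
    "\<forall>y m. m \<in> words k \<longrightarrow> sqnorm (\<Omega> - S) (b y m) \<le> 1"
    "\<forall>x y. \<forall>z\<in>local_basis \<Omega>. \<psi> x y z = (\<Sum>m\<in>words k. a x m (restr z S) * b y m (restr z (\<Omega> - S)))"
    using assms(2) unfolding bipartite_decomp_def by blast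
  moreover have "\<Omega> - (\<Omega> - S) = S" using assms(1) by blast
  ultimately show ?thesis
    unfolding bipartite_decomp_def by (intro exI[of _ b] exI[of _ a]) (simp add: mult.commute)
qed

lemma bipartite_decomp_apply_local:
  assumes S: "S \<subseteq> \<Omega>" and U: "unitary_on S U" and dec: "bipartite_decomp \<Omega> S k \<psi>"
  shows "bipartite_decomp \<Omega> S k (\<lambda>x y. apply_local S U (\<psi> x y))"
proof -
  obtain a b where
    na: "\<forall>x m. m \<in> words k \<longrightarrow> sqnorm S (a x m) \<le> 1" and
    nb: "\<forall>y m. m \<in> words k \<longrightarrow> sqnorm (\<Omega> - S) (b y m) \<le> 1" and
    rep: "\<forall>x y. \<forall>z\<in>local_basis \<Omega>. \<psi> x y z = (\<Sum>m\<in>words k. a x m (restr z S) * b y m (restr z (\<Omega> - S)))"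
    using dec unfolding bipartite_decomp_def by blast
  define a' where "a' x m u = (\<Sum>w\<in>local_basis S. U u w * a x m w)" for x m u
  have "apply_local S U (\<psi> x y) z = (\<Sum>m\<in>words k. a' x m (restr z S) * b y m (restr z (\<Omega> - S)))"
    if z: "z \<in> local_basis \<Omega>" for x y z
  proof -
    let ?u = "restr z S" and ?v = "restr z (\<Omega> - S)"
    have "join_basis ?u ?v = z" using z S by (simp add: join_basis_restr Un_absorb1)
    then have "apply_local S U (\<psi> x y) z = (\<Sum>w\<in>local_basis S. U ?u w * \<psi> x y (join_basis w ?v))"
      using apply_local_join_basis[OF S restr_in_local_basis[of z] restr_in_local_basis[of z], of U "\<psi> x y"]
      by simp
    also have "\<dots> = (\<Sum>w\<in>local_basis S. \<Sum>m\<in>words k. U ?u w * a x m w * b y m ?v)"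
    proof (intro sum.cong refl)
      fix w assume "w \<in> local_basis S"
      with rep have "\<psi> x y (join_basis w ?v) = (\<Sum>m\<in>words k. a x m w * b y m ?v)"
        by (intro product_sum_at_join_basis[OF S _ restr_in_local_basis]) auto
      then show "U ?u w * \<psi> x y (join_basis w ?v) = (\<Sum>m\<in>words k. U ?u w * a x m w * b y m ?v)"
        by (simp add: sum_distrib_left mult.assoc)
    qed
    also have "\<dots> = (\<Sum>m\<in>words k. a' x m ?u * b y m ?v)"
      by (subst sum.swap) (simp add: a'_def sum_distrib_right)
    finally show ?thesis .
  qed
  moreover have "sqnorm S (a' x m) = sqnorm S (a x m)" for x m
    unfolding a'_def sqnorm_def by (rule unitary_on_isometry[OF U, unfolded sqnorm_def])
  ultimately show ?thesis
    unfolding bipartite_decomp_def using na nb by (intro exI[of _ a'] exI[of _ b]) auto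
qed

(* Splitting on the value of the sent qubit q doubles the number of terms. *)
lemma bipartite_decomp_send:
  assumes q: "q \<in> S" and S: "S \<subseteq> \<Omega>" "finite \<Omega>" and dec: "bipartite_decomp \<Omega> S k \<psi>"
  shows "bipartite_decomp \<Omega> (S - {q}) (Suc k) \<psi>"
proof -
  obtain a b where
    na: "\<forall>x m. m \<in> words k \<longrightarrow> sqnorm S (a x m) \<le> 1" and
    nb: "\<forall>y m. m \<in> words k \<longrightarrow> sqnorm (\<Omega> - S) (b y m) \<le> 1" and
    rep: "\<forall>x y. \<forall>z\<in>local_basis \<Omega>. \<psi> x y z = (\<Sum>m\<in>words k. a x m (restr z S) * b y m (restr z (\<Omega> - S)))"
    using dec unfolding bipartite_decomp_def by blast
  define a' where "a' x m u = a x (tl m) (u(q := hd m))" for x m u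
  define b' where "b' y m v = (if v q = hd m then 1 else 0) * b y (tl m) (v(q := False))" for y m v
  have Sq: "\<Omega> - (S - {q}) = insert q (\<Omega> - S)" using q S by blast
  have "\<psi> x y z = (\<Sum>m\<in>words (Suc k). a' x m (restr z (S - {q})) * b' y m (restr z (\<Omega> - (S - {q}))))"
    if z: "z \<in> local_basis \<Omega>" for x y z
  proof -
    have restr_upd: "(restr z (S - {q}))(q := z q) = restr z S"
      "(restr z (\<Omega> - (S - {q})))(q := False) = restr z (\<Omega> - S)"
      "restr z (\<Omega> - (S - {q})) q = z q"
      using q S by (auto simp: restr_def fun_eq_iff)
    have "(\<Sum>m\<in>words (Suc k). a' x m (restr z (S - {q})) * b' y m (restr z (\<Omega> - (S - {q}))))
       = (\<Sum>\<beta>\<in>UNIV. \<Sum>m\<in>words k.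
            a x m ((restr z (S - {q}))(q := \<beta>)) * ((if z q = \<beta> then 1 else 0) * b y m (restr z (\<Omega> - S))))"
      by (simp add: sum_words_Suc a'_def b'_def restr_upd(2,3))
    also have "\<dots> = (\<Sum>m\<in>words k. a x m ((restr z (S - {q}))(q := z q)) * b y m (restr z (\<Omega> - S)))"
      by (cases "z q") (simp_all add: UNIV_bool)
    also have "\<dots> = \<psi> x y z"
      using rep z by (simp add: restr_upd(1))
    finally show ?thesis ..
  qed
  moreover have "sqnorm (S - {q}) (a' x m) \<le> 1" if "m \<in> words (Suc k)" for x m
  proof -
    have "sqnorm (S - {q}) (a' x m) \<le> sqnorm S (a x (tl m))"
      unfolding a'_def by (rule sqnorm_fun_upd_le[OF q finite_subset[OF S]])
    also have "\<dots> \<le> 1" using na that by (simp add: words_def)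
    finally show ?thesis .
  qed
  moreover have "sqnorm (\<Omega> - (S - {q})) (b' y m) \<le> 1" if "m \<in> words (Suc k)" for y m
  proof -
    have "sqnorm (\<Omega> - (S - {q})) (b' y m) = sqnorm (\<Omega> - S) (b y (tl m))"
      unfolding b'_def Sq using q S(2) by (intro sqnorm_insert_indicator) auto
    also have "\<dots> \<le> 1" using nb that by (simp add: words_def)
    finally show ?thesis .
  qed
  ultimately show ?thesis
    unfolding bipartite_decomp_def by (intro exI[of _ a'] exI[of _ b']) auto
qed

lemma bipartite_decomp_round:
  assumes OA: "OA \<subseteq> {0..<N}" and q: "q \<in> owned N OA p" and U: "unitary_on (owned N OA p) U"
    and dec: "bipartite_decomp {0..<N} OA k \<psi>"
  shows "bipartite_decomp {0..<N} (transfer OA p q) (Suc k) (\<lambda>x y. apply_local (owned N OA p) U (\<psi> x y))"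
proof (cases p)
  case True
  with assms show ?thesis
    by (simp add: owned_def transfer_def bipartite_decomp_send bipartite_decomp_apply_local)
next
  case False
  let ?\<Omega> = "{0..<N} :: nat set"
  have "bipartite_decomp ?\<Omega> (?\<Omega> - OA) k (\<lambda>y x. \<psi> x y)"
    by (rule bipartite_decomp_swap[OF OA dec])
  then have "bipartite_decomp ?\<Omega> ((?\<Omega> - OA) - {q}) (Suc k) (\<lambda>y x. apply_local (?\<Omega> - OA) U (\<psi> x y))"
    using False q U
    by (intro bipartite_decomp_send bipartite_decomp_apply_local) (auto simp: owned_def)
  then have "bipartite_decomp ?\<Omega> (?\<Omega> - ((?\<Omega> - OA) - {q})) (Suc k) (\<lambda>x y. apply_local (?\<Omega> - OA) U (\<psi> x y))"
    by (rule bipartite_decomp_swap[rotated]) blast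
  moreover have "?\<Omega> - ((?\<Omega> - OA) - {q}) = insert q OA"
    using OA q False by (auto simp: owned_def)
  ultimately show ?thesis
    using False by (simp add: owned_def transfer_def)
qed

lemma bipartite_decomp_run:
  assumes "valid_rounds N OA rs" "OA \<subseteq> {0..<N}" "bipartite_decomp {0..<N} OA k \<psi>"
  shows "\<exists>OA'. OA' \<subseteq> {0..<N} \<and>
    bipartite_decomp {0..<N} OA' (k + length rs) (\<lambda>x y. run N OA rs (\<psi> x y))"
  using assms
proof (induction rs arbitrary: OA k \<psi>)
  case (Cons r rs)
  obtain p U q where r: "r = (p, U, q)" by (cases r)
  with Cons.prems have "valid_rounds N (transfer OA p q) rs" "transfer OA p q \<subseteq> {0..<N}"
    "bipartite_decomp {0..<N} (transfer OA p q) (Suc k) (\<lambda>x y. apply_local (owned N OA p) U (\<psi> x y))"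
    by (auto simp: transfer_subset bipartite_decomp_round)
  from Cons.IH[OF this] r show ?case by simp
qed auto

section \<open>Sums of products of bounded functions\<close>

definition sum_of_products :: "nat \<Rightarrow> ('x \<Rightarrow> 'y \<Rightarrow> real) \<Rightarrow> bool" where
  "sum_of_products M g \<longleftrightarrow> (\<exists>k a b. k \<le> M \<and> (\<forall>i<k. \<forall>x. \<bar>a i x\<bar> \<le> 1) \<and> (\<forall>i<k. \<forall>y. \<bar>b i y\<bar> \<le> 1) \<and>
      (\<forall>x y. g x y = (\<Sum>i<k. a i x * b i y)))"

lemma sum_of_productsE:
  assumes "sum_of_products M g"
  obtains k a b where "k \<le> M" "\<forall>i<k. \<forall>x. \<bar>a i x\<bar> \<le> 1" "\<forall>i<k. \<forall>y. \<bar>b i y\<bar> \<le> 1"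
    "\<And>x y. g x y = (\<Sum>i<k. a i x * b i y)"
  using assms unfolding sum_of_products_def by blast

lemma sum_of_products_finite_sum:
  fixes a :: "'i \<Rightarrow> 'x \<Rightarrow> real" and b :: "'i \<Rightarrow> 'y \<Rightarrow> real"
  assumes "finite I" "card I \<le> M" "\<forall>i\<in>I. \<forall>x. \<bar>a i x\<bar> \<le> 1" "\<forall>i\<in>I. \<forall>y. \<bar>b i y\<bar> \<le> 1"
  shows "sum_of_products M (\<lambda>x y. \<Sum>i\<in>I. a i x * b i y)"
proof -
  obtain h where h: "bij_betw h {..<card I} I"
    using ex_bij_betw_nat_finite[OF assms(1)] by (auto simp: atLeast0LessThan)
  then have "h i \<in> I" if "i < card I" for i using that by (auto simp: bij_betw_def)
  moreover have "(\<Sum>i\<in>I. a i x * b i y) = (\<Sum>i<card I. a (h i) x * b (h i) y)" for x y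
    using sum.reindex_bij_betw[OF h, of "\<lambda>i. a i x * b i y"] by simp
  ultimately show ?thesis unfolding sum_of_products_def using assms
    by (intro exI[of _ "card I"] exI[of _ "\<lambda>i. a (h i)"] exI[of _ "\<lambda>i. b (h i)"]) auto
qed

lemma sum_of_products_mono: "sum_of_products M g \<Longrightarrow> M \<le> M' \<Longrightarrow> sum_of_products M' g"
  unfolding sum_of_products_def using order_trans by blast

lemma sum_of_products_zero: "sum_of_products M (\<lambda>x y. 0)"
  unfolding sum_of_products_def by (intro exI[of _ 0]) auto

lemma sum_of_products_one: "sum_of_products 1 (\<lambda>x y. 1)"
  unfolding sum_of_products_def by (intro exI[of _ 1] exI[of _ "\<lambda>i x. 1"]) auto

lemma sum_of_products_scale:
  assumes "sum_of_products M g" "\<bar>c\<bar> \<le> 1"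
  shows "sum_of_products M (\<lambda>x y. c * g x y)"
proof -
  obtain k a b where k: "k \<le> M" "\<forall>i<k. \<forall>x. \<bar>a i x\<bar> \<le> 1" "\<forall>i<k. \<forall>y. \<bar>b i y\<bar> \<le> 1"
    "\<And>x y. g x y = (\<Sum>i<k. a i x * b i y)" using sum_of_productsE[OF assms(1)] by blast
  have "\<bar>c * a i x\<bar> \<le> 1" if "i < k" for i x
    using k(2) that assms(2) by (simp add: abs_mult mult_le_one)
  with k show ?thesis unfolding sum_of_products_def
    by (intro exI[of _ k] exI[of _ "\<lambda>i x. c * a i x"] exI[of _ b]) (auto simp: sum_distrib_left mult_ac)
qed

lemma sum_of_products_mult:
  assumes "sum_of_products M1 g1" "sum_of_products M2 g2"
  shows "sum_of_products (M1 * M2) (\<lambda>x y. g1 x y * g2 x y)"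
proof -
  obtain k1 a1 b1 where k1: "k1 \<le> M1" "\<forall>i<k1. \<forall>x. \<bar>a1 i x\<bar> \<le> 1" "\<forall>i<k1. \<forall>y. \<bar>b1 i y\<bar> \<le> 1"
    "\<And>x y. g1 x y = (\<Sum>i<k1. a1 i x * b1 i y)" using sum_of_productsE[OF assms(1)] by blast
  obtain k2 a2 b2 where k2: "k2 \<le> M2" "\<forall>i<k2. \<forall>x. \<bar>a2 i x\<bar> \<le> 1" "\<forall>i<k2. \<forall>y. \<bar>b2 i y\<bar> \<le> 1"
    "\<And>x y. g2 x y = (\<Sum>i<k2. a2 i x * b2 i y)" using sum_of_productsE[OF assms(2)] by blast
  have "g1 x y * g2 x y = (\<Sum>(i, j)\<in>{..<k1} \<times> {..<k2}. (a1 i x * a2 j x) * (b1 i y * b2 j y))" for x y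
    unfolding k1(4) k2(4) sum_product sum.cartesian_product by (intro sum.cong refl) (auto simp: mult_ac)
  moreover have "sum_of_products (M1 * M2)
      (\<lambda>x y. \<Sum>p\<in>{..<k1} \<times> {..<k2}. (a1 (fst p) x * a2 (snd p) x) * (b1 (fst p) y * b2 (snd p) y))"
    using k1 k2 by (intro sum_of_products_finite_sum) (auto simp: abs_mult mult_le_one mult_le_mono)
  ultimately show ?thesis by (simp add: case_prod_beta')
qed

lemma sum_of_products_add:
  assumes "sum_of_products M1 g1" "sum_of_products M2 g2"
  shows "sum_of_products (M1 + M2) (\<lambda>x y. g1 x y + g2 x y)"
proof -
  obtain k1 a1 b1 where k1: "k1 \<le> M1" "\<forall>i<k1. \<forall>x. \<bar>a1 i x\<bar> \<le> 1" "\<forall>i<k1. \<forall>y. \<bar>b1 i y\<bar> \<le> 1"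
    "\<And>x y. g1 x y = (\<Sum>i<k1. a1 i x * b1 i y)" using sum_of_productsE[OF assms(1)] by blast
  obtain k2 a2 b2 where k2: "k2 \<le> M2" "\<forall>i<k2. \<forall>x. \<bar>a2 i x\<bar> \<le> 1" "\<forall>i<k2. \<forall>y. \<bar>b2 i y\<bar> \<le> 1"
    "\<And>x y. g2 x y = (\<Sum>i<k2. a2 i x * b2 i y)" using sum_of_productsE[OF assms(2)] by blast
  define I where "I = Inl ` {..<k1} \<union> Inr ` {..<k2}"
  have disj: "Inl ` {..<k1} \<inter> Inr ` {..<k2} = {}" by auto
  have "card I = k1 + k2" unfolding I_def
    by (subst card_Un_disjoint[OF _ _ disj]) (auto simp: card_image)
  then have "sum_of_products (M1 + M2) (\<lambda>x y. \<Sum>i\<in>I. case_sum a1 a2 i x * case_sum b1 b2 i y)"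
    using k1 k2 by (intro sum_of_products_finite_sum) (auto simp: I_def)
  moreover have "g1 x y + g2 x y = (\<Sum>i\<in>I. case_sum a1 a2 i x * case_sum b1 b2 i y)" for x y
    unfolding I_def k1(4) k2(4) by (subst sum.union_disjoint[OF _ _ disj]) (auto simp: sum.reindex)
  ultimately show ?thesis by simp
qed

lemma sum_of_products_power: "sum_of_products M g \<Longrightarrow> sum_of_products (M ^ n) (\<lambda>x y. g x y ^ n)"
  by (induction n) (simp_all add: sum_of_products_one[simplified] sum_of_products_mult)

lemma sum_of_products_one_minus: "sum_of_products M g \<Longrightarrow> sum_of_products (Suc M) (\<lambda>x y. 1 - g x y)"
  using sum_of_products_add[OF sum_of_products_one sum_of_products_scale[of M g "-1"]] by simp

lemma sum_of_products_sum:
  assumes "finite F" "\<forall>S\<in>F. sum_of_products M (G S)"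
  shows "sum_of_products (card F * M) (\<lambda>x y. \<Sum>S\<in>F. G S x y)"
  using assms
proof (induction F rule: finite_induct)
  case (insert S F)
  then have "sum_of_products (M + card F * M) (\<lambda>x y. G S x y + (\<Sum>S\<in>F. G S x y))"
    by (intro sum_of_products_add) auto
  with insert show ?case by simp
qed (simp add: sum_of_products_zero)

lemma sum_of_products_Re_sum:
  fixes A :: "'i \<Rightarrow> 'x \<Rightarrow> complex" and B :: "'i \<Rightarrow> 'y \<Rightarrow> complex"
  assumes "finite I" "card I \<le> M" "\<forall>i\<in>I. \<forall>x. cmod (A i x) \<le> 1" "\<forall>i\<in>I. \<forall>y. cmod (B i y) \<le> 1"
  shows "sum_of_products (2 * M) (\<lambda>x y. Re (\<Sum>i\<in>I. A i x * B i y))"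
proof -
  define a where "a p x = (if snd p then Re (A (fst p) x) else Im (A (fst p) x))" for p x
  define b where "b p y = (if snd p then Re (B (fst p) y) else - Im (B (fst p) y))" for p y
  have Re_Im_le: "\<bar>Re z\<bar> \<le> 1" "\<bar>Im z\<bar> \<le> 1" if "cmod z \<le> 1" for z
    using that abs_Re_le_cmod[of z] abs_Im_le_cmod[of z] by linarith+
  have "Re (\<Sum>i\<in>I. A i x * B i y) = (\<Sum>p\<in>I \<times> UNIV. a p x * b p y)" for x y
    by (simp add: Re_sum sum.cartesian_product' UNIV_bool a_def b_def)
  moreover have "sum_of_products (2 * M) (\<lambda>x y. \<Sum>p\<in>I \<times> UNIV. a p x * b p y)"
    using assms by (intro sum_of_products_finite_sum) (auto simp: a_def b_def card_cartesian_product Re_Im_le)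
  ultimately show ?thesis by simp
qed

section \<open>The acceptance probability as a sum of products\<close>

lemma bipartite_decomp_init_state:
  assumes "n \<le> ka" "ka + n \<le> N"
  shows "bipartite_decomp {0..<N} {0..<ka} 0 (init_state n ka)"
proof -
  let ?\<Omega> = "{0..<N} :: nat set" and ?A = "{0..<ka} :: nat set"
  define ax where "ax x = (\<lambda>i. i < n \<and> x ! i)" for x :: "bool list"
  define bx where "bx y = (\<lambda>i. ka \<le> i \<and> i < ka + n \<and> y ! (i - ka))" for y :: "bool list"
  have ax: "ax x \<in> local_basis ?A" and bx: "bx y \<in> local_basis (?\<Omega> - ?A)" for x y
    using assms by (auto simp: ax_def bx_def local_basis_def)
  have "init_state n ka x y z =
      (\<Sum>m\<in>words 0. (if restr z ?A = ax x then 1 else 0) * (if restr z (?\<Omega> - ?A) = bx y then 1 else 0))"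
    if "z \<in> local_basis ?\<Omega>" for x y z
  proof -
    have "init_basis n ka x y = join_basis (ax x) (bx y)"
      by (simp add: init_basis_def join_basis_def ax_def bx_def)
    moreover have "?A \<subseteq> ?\<Omega>" using assms by auto
    ultimately have "z = init_basis n ka x y \<longleftrightarrow> restr z ?A = ax x \<and> restr z (?\<Omega> - ?A) = bx y"
      using eq_join_basis_iff[OF _ that ax bx] by simp
    then show ?thesis by (simp add: init_state_def words_0)
  qed
  then show ?thesis
    unfolding bipartite_decomp_def using ax bx
    by (intro exI[of _ "\<lambda>x m u. if u = ax x then 1 else 0"] exI[of _ "\<lambda>y m v. if v = bx y then 1 else 0"])
      (simp add: sqnorm_basis_vector)
qed

lemma prob_one_bounds:
  assumes "qprotocol n N ka rs q"
  shows "0 \<le> prob_one n N ka rs q x y \<and> prob_one n N ka rs q x y \<le> 1"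
proof
  show "0 \<le> prob_one n N ka rs q x y" unfolding prob_one_def by (intro sum_nonneg) auto
  have p: "n \<le> ka" "ka + n \<le> N" "valid_rounds N {0..<ka} rs"
    using assms by (auto simp: qprotocol_def)
  have "prob_one n N ka rs q x y \<le> sqnorm {0..<N} (run N {0..<ka} rs (init_state n ka x y))"
    unfolding prob_one_def sqnorm_def by (intro sum_mono) auto
  also have "\<dots> = sqnorm {0..<N} (init_state n ka x y)"
    using p by (intro sqnorm_run) auto
  also have "\<dots> = 1"
    unfolding init_state_def using p
    by (intro sqnorm_basis_vector) (auto simp: init_basis_def local_basis_def)
  finally show "prob_one n N ka rs q x y \<le> 1" .
qed

lemma weighted_sqnorm_product_sum:
  fixes a b :: "'m \<Rightarrow> basis \<Rightarrow> complex"
  assumes S: "S \<subseteq> \<Omega>"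
    and rep: "\<forall>z\<in>local_basis \<Omega>. \<phi> z = (\<Sum>m\<in>I. a m (restr z S) * b m (restr z (\<Omega> - S)))"
    and h: "\<forall>u\<in>local_basis S. \<forall>v\<in>local_basis (\<Omega> - S). h (join_basis u v) = h1 u * h2 v"
  shows "(\<Sum>z\<in>local_basis \<Omega>. h z * (\<phi> z * cnj (\<phi> z))) =
    (\<Sum>(m, m')\<in>I \<times> I. (\<Sum>u\<in>local_basis S. h1 u * (a m u * cnj (a m' u))) *
                       (\<Sum>v\<in>local_basis (\<Omega> - S). h2 v * (b m v * cnj (b m' v))))"
proof -
  let ?A = "local_basis S" and ?B = "local_basis (\<Omega> - S)"
  let ?F = "\<lambda>u v (m, m'). (h1 u * (a m u * cnj (a m' u))) * (h2 v * (b m v * cnj (b m' v)))"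
  have "(\<Sum>z\<in>local_basis \<Omega>. h z * (\<phi> z * cnj (\<phi> z))) =
      (\<Sum>u\<in>?A. \<Sum>v\<in>?B. h1 u * h2 v * ((\<Sum>m\<in>I. a m u * b m v) * cnj (\<Sum>m'\<in>I. a m' u * b m' v)))"
    unfolding sum_local_basis_split[OF S] using h product_sum_at_join_basis[OF S _ _ rep]
    by (intro sum.cong refl) simp
  also have "\<dots> = (\<Sum>u\<in>?A. \<Sum>v\<in>?B. \<Sum>p\<in>I \<times> I. ?F u v p)"
  proof -
    have prod: "(\<Sum>m\<in>I. f m) * cnj (\<Sum>m'\<in>I. g m') = (\<Sum>(m, m')\<in>I \<times> I. f m * cnj (g m'))"
      for f g :: "'m \<Rightarrow> complex"
      by (simp add: cnj_sum sum_product sum.cartesian_product)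
    show ?thesis unfolding prod by (simp add: sum_distrib_left case_prod_beta' mult_ac)
  qed
  also have "\<dots> = (\<Sum>u\<in>?A. \<Sum>p\<in>I \<times> I. \<Sum>v\<in>?B. ?F u v p)"
    by (intro sum.cong refl sum.swap)
  also have "\<dots> = (\<Sum>p\<in>I \<times> I. \<Sum>u\<in>?A. \<Sum>v\<in>?B. ?F u v p)"
    by (rule sum.swap)
  finally show ?thesis by (simp add: sum_product case_prod_beta')
qed

lemma cmod_weighted_inner_le:
  fixes g g' :: "basis \<Rightarrow> complex"
  assumes "sqnorm S g \<le> 1" "sqnorm S g' \<le> 1" "\<forall>u. cmod (h u) \<le> 1"
  shows "cmod (\<Sum>u\<in>local_basis S. h u * (g u * cnj (g' u))) \<le> 1"
proof -
  have "cmod (\<Sum>u\<in>local_basis S. h u * (g u * cnj (g' u))) \<le> (\<Sum>u\<in>local_basis S. cmod (h u * (g u * cnj (g' u))))"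
    by (rule norm_sum)
  also have "\<dots> \<le> (\<Sum>u\<in>local_basis S. ((cmod (g u))\<^sup>2 + (cmod (g' u))\<^sup>2) / 2)"
  proof (rule sum_mono)
    fix u
    have "cmod (h u * (g u * cnj (g' u))) \<le> cmod (g u) * cmod (g' u)"
      using assms(3) by (simp add: norm_mult mult_left_le_one_le)
    also have "\<dots> \<le> ((cmod (g u))\<^sup>2 + (cmod (g' u))\<^sup>2) / 2"
      using sum_squares_bound[of "cmod (g u)" "cmod (g' u)"] by (simp add: power2_eq_square)
    finally show "cmod (h u * (g u * cnj (g' u))) \<le> ((cmod (g u))\<^sup>2 + (cmod (g' u))\<^sup>2) / 2" .
  qed
  also have "\<dots> = (sqnorm S g + sqnorm S g') / 2"
    unfolding sqnorm_def by (simp add: sum_divide_distrib[symmetric] sum.distrib)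
  also have "\<dots> \<le> 1" using assms(1,2) by simp
  finally show ?thesis .
qed

lemma sum_of_products_prob_one:
  assumes "qprotocol n N ka rs q"
  shows "sum_of_products (2 ^ (2 * length rs + 1)) (prob_one n N ka rs q)"
proof -
  let ?\<Omega> = "{0..<N} :: nat set" and ?c = "length rs"
  have p: "n \<le> ka" "ka + n \<le> N" "valid_rounds N {0..<ka} rs"
    using assms by (auto simp: qprotocol_def)
  obtain OA where OA: "OA \<subseteq> ?\<Omega>"
    "bipartite_decomp ?\<Omega> OA ?c (\<lambda>x y. run N {0..<ka} rs (init_state n ka x y))"
    using bipartite_decomp_run[OF p(3) _ bipartite_decomp_init_state[OF p(1,2)]] p(1,2) by auto
  then obtain a b where
    na: "\<forall>x m. m \<in> words ?c \<longrightarrow> sqnorm OA (a x m) \<le> 1" and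
    nb: "\<forall>y m. m \<in> words ?c \<longrightarrow> sqnorm (?\<Omega> - OA) (b y m) \<le> 1" and
    rep: "\<forall>x y. \<forall>z\<in>local_basis ?\<Omega>. run N {0..<ka} rs (init_state n ka x y) z =
            (\<Sum>m\<in>words ?c. a x m (restr z OA) * b y m (restr z (?\<Omega> - OA)))"
    unfolding bipartite_decomp_def by auto
  define h1 :: "basis \<Rightarrow> complex" where "h1 u = (if q \<in> OA then of_bool (u q) else 1)" for u
  define h2 :: "basis \<Rightarrow> complex" where "h2 v = (if q \<in> OA then 1 else of_bool (v q))" for v
  define A where "A p x = (\<Sum>u\<in>local_basis OA. h1 u * (a x (fst p) u * cnj (a x (snd p) u)))" for p x
  define B where "B p y = (\<Sum>v\<in>local_basis (?\<Omega> - OA). h2 v * (b y (fst p) v * cnj (b y (snd p) v)))" for p y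
  have "prob_one n N ka rs q x y = Re (\<Sum>p\<in>words ?c \<times> words ?c. A p x * B p y)" for x y
  proof -
    let ?\<phi> = "run N {0..<ka} rs (init_state n ka x y)"
    have "of_bool (join_basis u v q) = h1 u * h2 v"
      if "u \<in> local_basis OA" "v \<in> local_basis (?\<Omega> - OA)" for u v
      using that by (auto simp: h1_def h2_def join_basis_def local_basis_def)
    then have decomp: "(\<Sum>z\<in>local_basis ?\<Omega>. of_bool (z q) * (?\<phi> z * cnj (?\<phi> z))) =
        (\<Sum>p\<in>words ?c \<times> words ?c. A p x * B p y)"
      unfolding A_def B_def using rep
      by (subst weighted_sqnorm_product_sum[OF OA(1)]) (simp_all add: case_prod_beta')
    have "prob_one n N ka rs q x y = (\<Sum>z\<in>local_basis ?\<Omega>. Re (of_bool (z q) * (?\<phi> z * cnj (?\<phi> z))))"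
      unfolding prob_one_def using cmod_power2 by (intro sum.cong refl) (simp add: power2_eq_square)
    also have "\<dots> = Re (\<Sum>p\<in>words ?c \<times> words ?c. A p x * B p y)"
      by (simp only: Re_sum[symmetric] decomp)
    finally show ?thesis .
  qed
  moreover have "cmod (A p x) \<le> 1" "cmod (B p y) \<le> 1" if "p \<in> words ?c \<times> words ?c" for x y p
    using na nb that unfolding A_def B_def
    by (auto intro!: cmod_weighted_inner_le simp: h1_def h2_def)
  moreover have "card (words ?c \<times> words ?c) = 2 ^ (2 * ?c)"
    by (simp add: card_words card_cartesian_product power_add[symmetric] mult_2)
  ultimately have "sum_of_products (2 * 2 ^ (2 * ?c)) (\<lambda>x y. prob_one n N ka rs q x y)"
    using sum_of_products_Re_sum[where I = "words ?c \<times> words ?c" and M = "2 ^ (2 * ?c)" and A = A and B = B]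
    by (simp add: finite_words)
  then show ?thesis by simp
qed

section \<open>Majority amplification\<close>

definition majority_prob :: "nat \<Rightarrow> real \<Rightarrow> real" where
  "majority_prob D t = (\<Sum>S\<in>{S\<in>Pow {..<D}. D < 2 * card S}. t ^ card S * (1 - t) ^ (D - card S))"

lemma sum_Pow_binomial_weights: "(\<Sum>S\<in>Pow {..<D}. t ^ card S * (1 - t) ^ (D - card S)) = (1::real)"
proof -
  have "(\<Sum>S\<in>Pow {..<D}. t ^ card S * (1 - t) ^ (D - card S))
      = (\<Sum>S\<in>Pow {..<D}. (\<Prod>i\<in>S. t) * (\<Prod>i\<in>{..<D} - S. 1 - t))"
    by (intro sum.cong refl) (auto simp: card_Diff_subset finite_subset)
  also have "\<dots> = (\<Prod>i\<in>{..<D}. t + (1 - t))"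
    by (rule prod_add[symmetric]) simp
  finally show ?thesis by simp
qed

lemma card_Pow_filter_le: "card {S\<in>Pow {..<D::nat}. P S} \<le> 2 ^ D"
  using card_mono[of "Pow {..<D}" "{S\<in>Pow {..<D}. P S}"] by (auto simp: card_Pow)

lemma power_mult_power_le:
  fixes a b :: real
  assumes "0 \<le> a" "a \<le> b" "h \<le> k" "k \<le> 2 * h"
  shows "a ^ k * b ^ (2 * h - k) \<le> (a * b) ^ h"
proof -
  have "a ^ k * b ^ (2 * h - k) = a ^ h * (a ^ (k - h) * b ^ (2 * h - k))"
    using assms(3) by (simp add: power_add[symmetric])
  also have "\<dots> \<le> a ^ h * (b ^ (k - h) * b ^ (2 * h - k))"
    using assms by (intro mult_left_mono mult_right_mono power_mono) auto
  also have "\<dots> = (a * b) ^ h"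
    using assms(3,4) by (simp add: power_add[symmetric] power_mult_distrib)
  finally show ?thesis .
qed

lemma binomial_tail_le:
  fixes a b :: real
  assumes "0 \<le> a" "a \<le> b" "F \<subseteq> Pow {..<2 * h}" "\<forall>S\<in>F. h \<le> k S \<and> k S \<le> 2 * h"
  shows "(\<Sum>S\<in>F. a ^ k S * b ^ (2 * h - k S)) \<le> (4 * (a * b)) ^ h"
proof -
  have "(\<Sum>S\<in>F. a ^ k S * b ^ (2 * h - k S)) \<le> (\<Sum>S\<in>F. (a * b) ^ h)"
    using assms by (intro sum_mono power_mult_power_le) auto
  also have "\<dots> = card F * (a * b) ^ h" by simp
  also have "\<dots> \<le> 2 ^ (2 * h) * (a * b) ^ h"
  proof (rule mult_right_mono)
    have "card F \<le> card (Pow {..<2 * h})"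
      using assms(3) by (intro card_mono) auto
    then show "real (card F) \<le> 2 ^ (2 * h)"
      by (simp add: card_Pow flip: of_nat_le_iff)
  qed (use assms in simp)
  also have "\<dots> = (4 * (a * b)) ^ h" by (simp add: power_mult power_mult_distrib)
  finally show ?thesis .
qed

lemma four_mult_one_minus_le: "t \<le> 1/3 \<or> 2/3 \<le> t \<Longrightarrow> 4 * (t * (1 - t)) \<le> (8/9 :: real)"
proof -
  assume "t \<le> 1/3 \<or> 2/3 \<le> t"
  then have "0 \<le> (t - 1/3) * (t - 2/3)"
    by (auto intro: mult_nonpos_nonpos mult_nonneg_nonneg)
  moreover have "4 * (t * (1 - t)) = 8/9 - 4 * ((t - 1/3) * (t - 2/3))"
    by (simp add: field_simps)
  ultimately show ?thesis by linarith
qed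

lemma card_subset_lessThan_le: "S \<subseteq> {..<D} \<Longrightarrow> card S \<le> D"
  by (simp add: lessThan_atLeast0 subset_eq_atLeast0_lessThan_card)

lemma majority_prob_low:
  assumes "0 \<le> t" "t \<le> 1/3"
  shows "0 \<le> majority_prob (2 * h) t \<and> majority_prob (2 * h) t \<le> (8/9) ^ h"
proof
  show "0 \<le> majority_prob (2 * h) t"
    unfolding majority_prob_def using assms by (intro sum_nonneg) auto
  have "majority_prob (2 * h) t \<le> (4 * (t * (1 - t))) ^ h"
    unfolding majority_prob_def using assms
    by (intro binomial_tail_le) (auto dest: card_subset_lessThan_le)
  also have "\<dots> \<le> (8/9) ^ h"
    using assms four_mult_one_minus_le[of t] by (intro power_mono) auto
  finally show "majority_prob (2 * h) t \<le> (8/9) ^ h" .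
qed

lemma majority_prob_high:
  assumes "2/3 \<le> t" "t \<le> 1"
  shows "1 - (8/9) ^ h \<le> majority_prob (2 * h) t \<and> majority_prob (2 * h) t \<le> 1"
proof -
  let ?G = "{S\<in>Pow {..<2 * h}. \<not> 2 * h < 2 * card S}"
  let ?f = "\<lambda>S. t ^ card S * (1 - t) ^ (2 * h - card S)"
  have "sum ?f (Pow {..<2 * h}) = sum ?f ({S\<in>Pow {..<2 * h}. 2 * h < 2 * card S} \<union> ?G)"
    by (rule sum.cong) auto
  also have "\<dots> = majority_prob (2 * h) t + sum ?f ?G"
    unfolding majority_prob_def by (rule sum.union_disjoint) auto
  finally have total: "majority_prob (2 * h) t + sum ?f ?G = 1"
    using sum_Pow_binomial_weights[where D = "2 * h" and t = t] by simp
  have "0 \<le> sum ?f ?G" using assms by (intro sum_nonneg) auto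
  moreover have "sum ?f ?G = (\<Sum>S\<in>?G. (1 - t) ^ (2 * h - card S) * t ^ (2 * h - (2 * h - card S)))"
    by (intro sum.cong refl) (simp add: mult.commute)
  moreover have "\<dots> \<le> (4 * ((1 - t) * t)) ^ h"
    using assms by (intro binomial_tail_le) auto
  moreover have "(4 * ((1 - t) * t)) ^ h \<le> (8/9) ^ h"
    using assms four_mult_one_minus_le[of t] by (intro power_mono) (auto simp: mult.commute)
  ultimately show ?thesis using total by linarith
qed

lemma sum_of_products_majority_prob:
  assumes "sum_of_products M g"
  shows "sum_of_products (2 ^ D * Suc M ^ D) (\<lambda>x y. majority_prob D (g x y))"
proof -
  let ?F = "{S\<in>Pow {..<D}. D < 2 * card S}"
  have "sum_of_products (Suc M ^ D) (\<lambda>x y. g x y ^ card S * (1 - g x y) ^ (D - card S))"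
    if "S \<in> ?F" for S
  proof -
    have "card S \<le> D" using that by (auto dest: card_subset_lessThan_le)
    have "M ^ card S * Suc M ^ (D - card S) \<le> Suc M ^ card S * Suc M ^ (D - card S)"
      by (intro mult_right_mono power_mono) auto
    also have "\<dots> = Suc M ^ D"
      using \<open>card S \<le> D\<close> by (simp add: power_add[symmetric])
    finally have "M ^ card S * Suc M ^ (D - card S) \<le> Suc M ^ D" .
    moreover have "sum_of_products (M ^ card S * Suc M ^ (D - card S))
        (\<lambda>x y. g x y ^ card S * (1 - g x y) ^ (D - card S))"
      by (intro sum_of_products_mult sum_of_products_power sum_of_products_one_minus assms)
    ultimately show ?thesis by (blast intro: sum_of_products_mono)
  qed
  then have "sum_of_products (card ?F * Suc M ^ D) (\<lambda>x y. majority_prob D (g x y))"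
    unfolding majority_prob_def by (intro sum_of_products_sum) auto
  then show ?thesis
    by (rule sum_of_products_mono) (intro mult_right_mono card_Pow_filter_le; simp)
qed

lemma sum_of_products_majority_prob_pow2:
  assumes "sum_of_products (2 ^ m) g"
  shows "sum_of_products (2 ^ (D * (m + 2))) (\<lambda>x y. majority_prob D (g x y))"
proof -
  have "Suc (2 ^ m) \<le> 2 ^ Suc m" by simp
  then have "(2::nat) ^ D * Suc (2 ^ m) ^ D \<le> 2 ^ D * (2 ^ Suc m) ^ D"
    by (intro mult_left_mono power_mono) auto
  also have "\<dots> = 2 ^ (D * (m + 2))"
    by (simp add: power_mult[symmetric] power_add[symmetric] algebra_simps)
  finally show ?thesis
    using sum_of_products_mono[OF sum_of_products_majority_prob[OF assms]] by blast
qed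

section \<open>Rounding to threshold indicators\<close>

definition sgn_bool :: "bool \<Rightarrow> real" where
  "sgn_bool s = (if s then 1 else -1)"

definition count_below :: "nat \<Rightarrow> real \<Rightarrow> real" where
  "count_below L w = (\<Sum>j\<in>{1..L}. of_bool (real j \<le> w))"

(* staircase L v = sgn v * floor (L * abs v), written as a signed count of thresholds so that
   staircase L (a x) is a signed sum of indicators of sets of x. *)
definition staircase :: "nat \<Rightarrow> real \<Rightarrow> real" where
  "staircase L v = (\<Sum>(j, s)\<in>{1..L} \<times> UNIV. sgn_bool s * of_bool (real j \<le> real L * (sgn_bool s * v)))"

lemma staircase_eq_count_below: "staircase L v = count_below L (real L * v) - count_below L (- (real L * v))"
proof -
  have "(\<Sum>s\<in>UNIV. sgn_bool s * of_bool (real j \<le> real L * (sgn_bool s * v))) =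
      of_bool (real j \<le> real L * v) - of_bool (real j \<le> - (real L * v))" for j
    by (simp add: UNIV_bool sgn_bool_def)
  then show ?thesis
    unfolding staircase_def count_below_def sum.cartesian_product[symmetric]
    by (simp only: sum_subtractf)
qed

lemma count_below_nonpos: "w \<le> 0 \<Longrightarrow> count_below L w = 0"
  by (simp add: count_below_def)

lemma count_below_floor:
  assumes "0 \<le> w" "w \<le> real L"
  shows "count_below L w = of_int \<lfloor>w\<rfloor>"
proof -
  have "real j \<le> w \<longleftrightarrow> j \<le> nat \<lfloor>w\<rfloor>" for j
    using assms le_nat_floor[of j w] by linarith
  then have "count_below L w = real (card ({1..L} \<inter> {j. j \<le> nat \<lfloor>w\<rfloor>}))"
    by (simp add: count_below_def sum_of_bool_eq)
  also have "{1..L} \<inter> {j. j \<le> nat \<lfloor>w\<rfloor>} = {1..nat \<lfloor>w\<rfloor>}"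
    using assms nat_le_iff[of "\<lfloor>w\<rfloor>" L] floor_le_iff[of w "int L"] by auto
  finally show ?thesis using assms by simp
qed

lemma staircase_approx:
  assumes "\<bar>v\<bar> \<le> 1"
  shows "\<bar>real L * v - staircase L v\<bar> \<le> 1" "\<bar>staircase L v\<bar> \<le> real L"
proof -
  have "\<bar>real L * v\<bar> \<le> real L"
    using assms mult_left_mono[of "\<bar>v\<bar>" 1 "real L"] by (simp add: abs_mult)
  moreover have "\<bar>w - (count_below L w - count_below L (- w))\<bar> \<le> 1 \<and>
      \<bar>count_below L w - count_below L (- w)\<bar> \<le> real L" if "\<bar>w\<bar> \<le> real L" for w
  proof (cases "0 \<le> w")
    case True
    then show ?thesis
      using that by (simp add: count_below_nonpos count_below_floor) linarith
  next
    case False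
    then show ?thesis
      using that by (simp add: count_below_nonpos count_below_floor) linarith
  qed
  ultimately show "\<bar>real L * v - staircase L v\<bar> \<le> 1" "\<bar>staircase L v\<bar> \<le> real L"
    unfolding staircase_eq_count_below by blast+
qed

lemma abs_mult_diff_le:
  fixes a b a' b' e :: real
  assumes "\<bar>a\<bar> \<le> 1" "\<bar>b'\<bar> \<le> 1" "\<bar>a - a'\<bar> \<le> e" "\<bar>b - b'\<bar> \<le> e"
  shows "\<bar>a * b - a' * b'\<bar> \<le> 2 * e"
proof -
  have "a * b - a' * b' = a * (b - b') + (a - a') * b'" by (simp add: algebra_simps)
  then have "\<bar>a * b - a' * b'\<bar> \<le> \<bar>a\<bar> * \<bar>b - b'\<bar> + \<bar>a - a'\<bar> * \<bar>b'\<bar>"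
    by (simp add: abs_mult[symmetric] abs_triangle_ineq)
  also have "\<dots> \<le> 1 * e + e * 1"
    using assms by (intro add_mono mult_mono) auto
  finally show ?thesis by simp
qed

lemma staircase_div_approx:
  assumes "\<bar>v\<bar> \<le> 1" "0 < L"
  shows "\<bar>v - staircase L v / real L\<bar> \<le> 1 / real L" "\<bar>staircase L v / real L\<bar> \<le> 1"
proof -
  have "v - staircase L v / real L = (real L * v - staircase L v) / real L"
    using assms(2) by (simp add: field_simps)
  then show "\<bar>v - staircase L v / real L\<bar> \<le> 1 / real L"
    using staircase_approx(1)[OF assms(1)] by (simp add: divide_right_mono)
  show "\<bar>staircase L v / real L\<bar> \<le> 1"
    using staircase_approx(2)[OF assms(1)] assms(2) by simp
qed

lemma sum_of_products_approx_by_indicators: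
  fixes g :: "'x \<Rightarrow> 'y \<Rightarrow> real"
  assumes "sum_of_products M g" "0 < L"
  shows "\<exists>(J :: (nat \<times> (nat \<times> bool) \<times> (nat \<times> bool)) set) A B \<sigma>.
    finite J \<and> card J \<le> 4 * M * L\<^sup>2 \<and> (\<forall>j\<in>J. \<sigma> j = 1 \<or> \<sigma> j = -1) \<and>
    (\<forall>x y. \<bar>g x y - (\<Sum>j\<in>J. \<sigma> j * of_bool (x \<in> A j) * of_bool (y \<in> B j)) / (real L)\<^sup>2\<bar>
             \<le> 2 * real M / real L)"
proof -
  obtain k a b where k: "k \<le> M" "\<forall>i<k. \<forall>x. \<bar>a i x\<bar> \<le> 1" "\<forall>i<k. \<forall>y. \<bar>b i y\<bar> \<le> 1"
    "\<And>x y. g x y = (\<Sum>i<k. a i x * b i y)" using sum_of_productsE[OF assms(1)] by blast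
  define P where "P = {1..L} \<times> (UNIV :: bool set)"
  define J where "J = {..<k} \<times> P \<times> P"
  define A :: "nat \<times> (nat \<times> bool) \<times> (nat \<times> bool) \<Rightarrow> 'x set"
    where "A = (\<lambda>(i, (j, s), _). {x. real j \<le> real L * (sgn_bool s * a i x)})"
  define B :: "nat \<times> (nat \<times> bool) \<times> (nat \<times> bool) \<Rightarrow> 'y set"
    where "B = (\<lambda>(i, _, (j, s)). {y. real j \<le> real L * (sgn_bool s * b i y)})"
  define \<sigma> :: "nat \<times> (nat \<times> bool) \<times> (nat \<times> bool) \<Rightarrow> real"
    where "\<sigma> = (\<lambda>(i, (_, s), (_, s')). sgn_bool s * sgn_bool s')"
  have "card P = 2 * L" by (simp add: P_def card_cartesian_product)
  then have "card J = 4 * k * L\<^sup>2" by (simp add: J_def card_cartesian_product power2_eq_square)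
  then have card: "card J \<le> 4 * M * L\<^sup>2" using k(1) by simp
  have sign: "\<forall>j\<in>J. \<sigma> j = 1 \<or> \<sigma> j = -1" by (auto simp: \<sigma>_def sgn_bool_def split: if_splits)
  have "\<bar>g x y - (\<Sum>j\<in>J. \<sigma> j * of_bool (x \<in> A j) * of_bool (y \<in> B j)) / (real L)\<^sup>2\<bar> \<le> 2 * real M / real L"
    for x y
  proof -
    define \<alpha> where "\<alpha> i p = sgn_bool (snd p) * of_bool (real (fst p) \<le> real L * (sgn_bool (snd p) * a i x))"
      for i p
    define \<beta> where "\<beta> i p = sgn_bool (snd p) * of_bool (real (fst p) \<le> real L * (sgn_bool (snd p) * b i y))"
      for i p
    have "\<sigma> (i, p, p') * of_bool (x \<in> A (i, p, p')) * of_bool (y \<in> B (i, p, p')) = \<alpha> i p * \<beta> i p'"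
      for i p p'
      by (cases p; cases p') (simp add: \<sigma>_def A_def B_def \<alpha>_def \<beta>_def)
    then have "(\<Sum>j\<in>J. \<sigma> j * of_bool (x \<in> A j) * of_bool (y \<in> B j)) = (\<Sum>i<k. (\<Sum>p\<in>P. \<alpha> i p) * (\<Sum>p\<in>P. \<beta> i p))"
      by (simp add: J_def sum.cartesian_product' sum_product)
    moreover have "(\<Sum>p\<in>P. \<alpha> i p) = staircase L (a i x)" "(\<Sum>p\<in>P. \<beta> i p) = staircase L (b i y)" for i
      by (simp_all add: P_def \<alpha>_def \<beta>_def staircase_def case_prod_beta')
    ultimately have "(\<Sum>j\<in>J. \<sigma> j * of_bool (x \<in> A j) * of_bool (y \<in> B j)) / (real L)\<^sup>2
        = (\<Sum>i<k. (staircase L (a i x) / real L) * (staircase L (b i y) / real L))"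
      by (simp add: sum_divide_distrib power2_eq_square)
    moreover have "\<bar>a i x * b i y - (staircase L (a i x) / real L) * (staircase L (b i y) / real L)\<bar>
        \<le> 2 * (1 / real L)" if "i < k" for i
      using that k(2,3) assms(2) by (intro abs_mult_diff_le staircase_div_approx) auto
    then have "\<bar>g x y - (\<Sum>i<k. (staircase L (a i x) / real L) * (staircase L (b i y) / real L))\<bar>
        \<le> (\<Sum>i<k. 2 * (1 / real L))"
      unfolding k(4) sum_subtractf[symmetric] by (intro order_trans[OF sum_abs] sum_mono) auto
    moreover have "(\<Sum>i<k. 2 * (1 / real L)) \<le> 2 * real M / real L"
      using k(1) assms(2) by (simp add: divide_right_mono)
    ultimately show ?thesis by simp
  qed
  moreover have "finite J" by (simp add: J_def P_def)
  ultimately show ?thesis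
    using card sign by (intro exI[of _ J] exI[of _ A] exI[of _ B] exI[of _ \<sigma>]) simp
qed

section \<open>Distinct signed rectangles\<close>

definition rect_sum :: "('a \<times> 'b) set set \<Rightarrow> (('a \<times> 'b) set \<Rightarrow> real) \<Rightarrow> 'a \<Rightarrow> 'b \<Rightarrow> real" where
  "rect_sum \<R> w x y = (\<Sum>R\<in>\<R>. w R * (if (x, y) \<in> R then 1 else 0))"

lemma is_rectangle_words: "A \<subseteq> words n \<Longrightarrow> B \<subseteq> words n \<Longrightarrow> is_rectangle n (A \<times> B)"
  by (auto simp: is_rectangle_def words_def)

(* A x B = A x (B symdiff {y0}) +- A x {y0}, and a column y0 for which both rectangles on the
   right are new exists as long as 2 * card R < 2^n. *)
lemma insert_signed_rectangle:
  assumes \<R>: "finite \<R>" "2 * card \<R> < 2 ^ n" "\<forall>R\<in>\<R>. is_rectangle n R \<and> (w R = 1 \<or> w R = -1)"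
    and AB: "A \<subseteq> words n" "B \<subseteq> words n" and s: "s = 1 \<or> s = -1"
  shows "\<exists>\<R>' w'. finite \<R>' \<and> card \<R>' \<le> card \<R> + 2 \<and> (\<forall>R\<in>\<R>'. is_rectangle n R \<and> (w' R = 1 \<or> w' R = -1)) \<and>
    (\<forall>x y. rect_sum \<R>' w' x y = s * of_bool (x \<in> A) * of_bool (y \<in> B) + rect_sum \<R> w x y)"
proof (cases "A = {} \<or> B = {}")
  case True
  then show ?thesis using \<R> by (intro exI[of _ \<R>] exI[of _ w]) auto
next
  case False
  define D where "D y = (if y \<in> B then B - {y} else insert y B)" for y
  have times_inj: "A \<times> X = A \<times> X' \<Longrightarrow> X = X'" for X X' :: "bool list set"
    using False by (metis snd_image_times)
  have "inj (\<lambda>y. A \<times> D y)"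
  proof (rule injI)
    fix y y' assume "A \<times> D y = A \<times> D y'"
    then have "D y = D y'" by (rule times_inj)
    then show "y = y'" by (auto simp: D_def split: if_splits)
  qed
  then have "card {y\<in>words n. A \<times> D y \<in> \<R>} \<le> card \<R>"
    using \<R>(1) by (intro card_inj_on_le[of "\<lambda>y. A \<times> D y"]) (auto intro: inj_on_subset)
  moreover have "card {y\<in>words n. A \<times> {y} \<in> \<R>} \<le> card \<R>"
    using \<R>(1) by (intro card_inj_on_le[of "\<lambda>y. A \<times> {y}"]) (auto simp: inj_on_def dest: times_inj)
  ultimately have "card ({y\<in>words n. A \<times> D y \<in> \<R>} \<union> {y\<in>words n. A \<times> {y} \<in> \<R>}) < card (words n)"
    using card_Un_le[of "{y\<in>words n. A \<times> D y \<in> \<R>}" "{y\<in>words n. A \<times> {y} \<in> \<R>}"] \<R>(2)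
    by (simp add: card_words)
  then have "{y\<in>words n. A \<times> D y \<in> \<R>} \<union> {y\<in>words n. A \<times> {y} \<in> \<R>} \<noteq> words n"
    by auto
  then obtain y0 where y0: "y0 \<in> words n" "A \<times> D y0 \<notin> \<R>" "A \<times> {y0} \<notin> \<R>"
    by blast
  define t :: real where "t = (if y0 \<in> B then 1 else -1)"
  define w' where "w' = w(A \<times> D y0 := s, A \<times> {y0} := s * t)"
  have distinct: "A \<times> D y0 \<noteq> A \<times> {y0}"
  proof
    assume "A \<times> D y0 = A \<times> {y0}"
    then have "D y0 = {y0}" by (rule times_inj)
    then show False using False by (auto simp: D_def split: if_splits)
  qed
  have "rect_sum (insert (A \<times> D y0) (insert (A \<times> {y0}) \<R>)) w' x y
      = s * of_bool (x \<in> A) * of_bool (y \<in> B) + rect_sum \<R> w x y" for x y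
  proof -
    have "rect_sum \<R> w' x y = rect_sum \<R> w x y"
      unfolding rect_sum_def w'_def using y0 by (intro sum.cong) auto
    then have sum: "rect_sum (insert (A \<times> D y0) (insert (A \<times> {y0}) \<R>)) w' x y
        = s * (of_bool (x \<in> A) * of_bool (y \<in> D y0)) + s * t * (of_bool (x \<in> A) * of_bool (y = y0))
          + rect_sum \<R> w x y"
      using \<R>(1) y0 distinct by (simp add: rect_sum_def w'_def)
    have split: "of_bool (y \<in> B) = of_bool (y \<in> D y0) + t * of_bool (y = y0)"
      by (auto simp: D_def t_def)
    show ?thesis unfolding sum split by (simp add: algebra_simps)
  qed
  moreover have "is_rectangle n (A \<times> D y0)" "is_rectangle n (A \<times> {y0})"
    using AB y0(1) by (auto intro!: is_rectangle_words simp: D_def)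
  moreover have "card (insert (A \<times> D y0) (insert (A \<times> {y0}) \<R>)) \<le> card \<R> + 2"
    using \<R>(1) by (simp add: card_insert_if)
  ultimately show ?thesis
    using \<R>(1,3) s by (intro exI[of _ "insert (A \<times> D y0) (insert (A \<times> {y0}) \<R>)"] exI[of _ w'])
      (auto simp: w'_def t_def)
qed

lemma signed_rectangles_distinct:
  fixes J :: "'j set" and A B :: "'j \<Rightarrow> bool list set" and \<sigma> :: "'j \<Rightarrow> real"
  assumes "finite J" "4 * card J \<le> 2 ^ n"
    and "\<forall>j\<in>J. A j \<subseteq> words n \<and> B j \<subseteq> words n \<and> (\<sigma> j = 1 \<or> \<sigma> j = -1)"
  shows "\<exists>\<R> w. finite \<R> \<and> card \<R> \<le> 2 * card J \<and> (\<forall>R\<in>\<R>. is_rectangle n R \<and> (w R = 1 \<or> w R = -1)) \<and>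
    (\<forall>x y. rect_sum \<R> w x y = (\<Sum>j\<in>J. \<sigma> j * of_bool (x \<in> A j) * of_bool (y \<in> B j)))"
  using assms
proof (induction J rule: finite_induct)
  case empty
  then show ?case by (intro exI[of _ "{}"]) (simp add: rect_sum_def)
next
  case (insert j J)
  then obtain \<R> w where \<R>: "finite \<R>" "card \<R> \<le> 2 * card J"
    "\<forall>R\<in>\<R>. is_rectangle n R \<and> (w R = 1 \<or> w R = -1)"
    "\<forall>x y. rect_sum \<R> w x y = (\<Sum>j\<in>J. \<sigma> j * of_bool (x \<in> A j) * of_bool (y \<in> B j))"
    by auto
  moreover have "2 * card \<R> < 2 ^ n" using \<R>(2) insert by simp
  ultimately obtain \<R>' w' where "finite \<R>'" "card \<R>' \<le> card \<R> + 2"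
    "\<forall>R\<in>\<R>'. is_rectangle n R \<and> (w' R = 1 \<or> w' R = -1)"
    "\<forall>x y. rect_sum \<R>' w' x y = \<sigma> j * of_bool (x \<in> A j) * of_bool (y \<in> B j) + rect_sum \<R> w x y"
    using insert_signed_rectangle[of \<R> n w "A j" "B j" "\<sigma> j"] insert.prems by auto
  moreover have "card \<R>' \<le> 2 * card (insert j J)" using \<R>(2) insert.hyps \<open>card \<R>' \<le> card \<R> + 2\<close> by simp
  ultimately show ?case
    using \<R>(4) insert.hyps by (intro exI[of _ \<R>'] exI[of _ w']) (simp only: sum.insert[OF insert.hyps], simp)
qed

lemma exact_rectangle_sum:
  "\<exists>\<R> w. finite \<R> \<and> card \<R> \<le> 4 ^ n \<and> (\<forall>R\<in>\<R>. is_rectangle n R \<and> w R = 1) \<and>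
     (\<forall>x\<in>words n. \<forall>y\<in>words n. rect_sum \<R> w x y = of_bool (f x y))"
proof -
  let ?S = "{p \<in> words n \<times> words n. f (fst p) (snd p)}"
  have inj: "inj_on (\<lambda>p. {p}) ?S" by simp
  have "card ((\<lambda>p. {p}) ` ?S) \<le> 4 ^ n"
  proof -
    have "card ?S \<le> card (words n \<times> words n)"
      by (rule card_mono) (auto simp: finite_words)
    then have "card ((\<lambda>p. {p}) ` ?S) \<le> card (words n \<times> words n)"
      by (simp only: card_image[OF inj])
    then show ?thesis by (simp add: card_cartesian_product card_words power_mult_distrib[symmetric])
  qed
  moreover have "finite ?S" by (simp add: finite_words)
  then have "rect_sum ((\<lambda>p. {p}) ` ?S) (\<lambda>R. 1) x y = of_bool (f x y)"
    if "x \<in> words n" "y \<in> words n" for x y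
    using that by (simp add: rect_sum_def sum.reindex[OF inj])
  moreover have "is_rectangle n {p}" if "p \<in> ?S" for p
    using that is_rectangle_words[of "{fst p}" n "{snd p}"] by auto
  ultimately show ?thesis
    by (intro exI[of _ "(\<lambda>p. {p}) ` ?S"] exI[of _ "\<lambda>R. 1"]) (auto simp: finite_words)
qed

section \<open>Approximating f by rectangles\<close>

definition gap_value :: "nat \<Rightarrow> bool \<Rightarrow> real \<Rightarrow> bool" where
  "gap_value d b s \<longleftrightarrow>
     (if b then 1 - 2 powr (- real d) \<le> s \<and> s \<le> 1 else 0 \<le> s \<and> s \<le> 2 powr (- real d))"

definition rect_approx ::
  "nat \<Rightarrow> (bool list \<Rightarrow> bool list \<Rightarrow> bool) \<Rightarrow> nat \<Rightarrow> real \<Rightarrow> (bool list \<times> bool list) set set \<Rightarrow>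
   ((bool list \<times> bool list) set \<Rightarrow> real) \<Rightarrow> bool" where
  "rect_approx n f d \<alpha> \<R> w \<longleftrightarrow> 0 \<le> \<alpha> \<and> \<alpha> \<le> 1 \<and> finite \<R> \<and>
     (\<forall>R\<in>\<R>. is_rectangle n R \<and> (w R = \<alpha> \<or> w R = - \<alpha>)) \<and>
     (\<forall>x\<in>words n. \<forall>y\<in>words n. gap_value d (f x y) (rect_sum \<R> w x y))"

lemma gap_value_of_bool: "gap_value d b (of_bool b)"
proof -
  have "2 powr (- real d) \<le> 1" by (simp add: powr_minus_divide ge_one_powr_ge_zero)
  then show ?thesis by (simp add: gap_value_def)
qed

lemma gap_value_near:
  assumes "if b then 1 - 3 * \<epsilon> \<le> r \<and> r \<le> 1 - 2 * \<epsilon> else 2 * \<epsilon> \<le> r \<and> r \<le> 3 * \<epsilon>"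
    and "\<bar>r - s\<bar> \<le> \<epsilon>" "4 * \<epsilon> = 2 powr (- real d)"
  shows "gap_value d b s"
  using assms by (cases b) (auto simp: gap_value_def abs_le_iff)

lemma rect_approx_exact: "\<exists>\<R> w. rect_approx n f d 1 \<R> w \<and> card \<R> \<le> 4 ^ n"
proof -
  obtain \<R> w where "finite \<R>" "card \<R> \<le> 4 ^ n" "\<forall>R\<in>\<R>. is_rectangle n R \<and> w R = 1"
    "\<forall>x\<in>words n. \<forall>y\<in>words n. rect_sum \<R> w x y = of_bool (f x y)"
    using exact_rectangle_sum[of n f] by blast
  then show ?thesis
    by (intro exI[of _ \<R>] exI[of _ w]) (simp add: rect_approx_def gap_value_of_bool)
qed

lemma rect_approx_of_signed_indicators:
  fixes J :: "'j set" and A B :: "'j \<Rightarrow> bool list set"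
  assumes J: "finite J" "\<forall>j\<in>J. \<sigma> j = 1 \<or> \<sigma> j = -1" and L: "0 < L"
    and gap: "\<forall>x\<in>words n. \<forall>y\<in>words n.
      gap_value d (f x y) ((\<Sum>j\<in>J. \<sigma> j * of_bool (x \<in> A j) * of_bool (y \<in> B j)) / (real L)\<^sup>2)"
  shows "\<exists>\<alpha> \<R> w. rect_approx n f d \<alpha> \<R> w \<and> card \<R> \<le> 16 * card J ^ 2"
proof (cases "4 * card J \<le> 2 ^ n")
  case True
  obtain \<R> w where \<R>: "finite \<R>" "card \<R> \<le> 2 * card J" "\<forall>R\<in>\<R>. is_rectangle n R \<and> (w R = 1 \<or> w R = -1)"
    "\<forall>x y. rect_sum \<R> w x y =
       (\<Sum>j\<in>J. \<sigma> j * of_bool (x \<in> A j \<inter> words n) * of_bool (y \<in> B j \<inter> words n))"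
    using signed_rectangles_distinct[OF J(1) True, where A = "\<lambda>j. A j \<inter> words n"
        and B = "\<lambda>j. B j \<inter> words n" and \<sigma> = \<sigma>] J(2)
    by auto
  define \<alpha> :: real where "\<alpha> = 1 / (real L)\<^sup>2"
  have "rect_sum \<R> (\<lambda>R. \<alpha> * w R) x y =
      (\<Sum>j\<in>J. \<sigma> j * of_bool (x \<in> A j) * of_bool (y \<in> B j)) / (real L)\<^sup>2"
    if "x \<in> words n" "y \<in> words n" for x y
  proof -
    have "rect_sum \<R> (\<lambda>R. \<alpha> * w R) x y = \<alpha> * rect_sum \<R> w x y"
      by (simp add: rect_sum_def sum_distrib_left mult.assoc)
    then show ?thesis using \<R>(4) that by (simp add: \<alpha>_def)
  qed
  moreover have "0 \<le> \<alpha>" "\<alpha> \<le> 1" using L by (simp_all add: \<alpha>_def)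
  moreover have "card \<R> \<le> 16 * card J ^ 2"
    using \<R>(2) le_square[of "card J"] unfolding power2_eq_square by linarith
  ultimately show ?thesis
    using \<R>(1,3) gap unfolding rect_approx_def
    by (intro exI[of _ \<alpha>] exI[of _ \<R>] exI[of _ "\<lambda>R. \<alpha> * w R"]) auto
next
  case False
  (* Now the 4^n singleton rectangles are few enough. *)
  then have "2 ^ n * 2 ^ n \<le> (4 * card J) * (4 * card J)"
    by (intro mult_le_mono) auto
  moreover have "(4::nat) ^ n = 2 ^ n * 2 ^ n"
    by (simp add: power_mult_distrib[symmetric])
  ultimately have "(4::nat) ^ n \<le> 16 * card J ^ 2"
    by (simp add: power2_eq_square)
  then show ?thesis using rect_approx_exact[of n f d] by (meson order_trans)
qed

(* The shift keeps the value at distance 2 * eps from 0 and 1, leaving room for rounding errors. *)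
lemma shifted_majority_prob_bounds:
  assumes t: "0 \<le> t" "t \<le> 1" "if b then 2/3 \<le> t else t \<le> 1/3"
    and \<epsilon>: "(8/9) ^ h \<le> \<epsilon>" "\<epsilon> \<le> 1/8"
  defines "r \<equiv> 2 * \<epsilon> + (1 - 4 * \<epsilon>) * majority_prob (2 * h) t"
  shows "if b then 1 - 3 * \<epsilon> \<le> r \<and> r \<le> 1 - 2 * \<epsilon> else 2 * \<epsilon> \<le> r \<and> r \<le> 3 * \<epsilon>"
proof (cases b)
  case True
  then have "1 - \<epsilon> \<le> majority_prob (2 * h) t" "majority_prob (2 * h) t \<le> 1"
    using majority_prob_high[of t h] t \<epsilon> by auto
  then have "(1 - 4 * \<epsilon>) * (1 - \<epsilon>) \<le> (1 - 4 * \<epsilon>) * majority_prob (2 * h) t"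
    "(1 - 4 * \<epsilon>) * majority_prob (2 * h) t \<le> 1 - 4 * \<epsilon>"
    using \<epsilon>(2) by (auto intro: mult_left_mono mult_left_le)
  moreover have "(1 - 4 * \<epsilon>) * (1 - \<epsilon>) = 1 - 5 * \<epsilon> + 4 * \<epsilon>\<^sup>2"
    by (simp add: algebra_simps power2_eq_square)
  moreover have "0 \<le> \<epsilon>\<^sup>2" by simp
  ultimately have "1 - 3 * \<epsilon> \<le> r" "r \<le> 1 - 2 * \<epsilon>"
    unfolding r_def by linarith+
  then show ?thesis using True by simp
next
  case False
  then have "0 \<le> majority_prob (2 * h) t" "majority_prob (2 * h) t \<le> \<epsilon>"
    using majority_prob_low[of t h] t \<epsilon> by auto
  moreover have "0 \<le> \<epsilon>" using \<epsilon>(1) zero_le_power[of "8/9::real" h] by linarith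
  ultimately have "0 \<le> (1 - 4 * \<epsilon>) * majority_prob (2 * h) t"
    "(1 - 4 * \<epsilon>) * majority_prob (2 * h) t \<le> majority_prob (2 * h) t"
    using \<epsilon>(2) by (simp_all add: mult_left_le_one_le)
  then have "2 * \<epsilon> \<le> r" "r \<le> 3 * \<epsilon>"
    unfolding r_def using \<open>majority_prob (2 * h) t \<le> \<epsilon>\<close> by linarith+
  then show ?thesis using False by simp
qed

lemma eight_ninths_power_le: "(8/9::real) ^ (6 * (d + 2)) \<le> 1 / 2 ^ (d + 2)"
proof -
  have "(8/9::real) ^ (6 * (d + 2)) = ((8/9) ^ 6) ^ (d + 2)" by (rule power_mult)
  also have "\<dots> \<le> (1/2) ^ (d + 2)" by (intro power_mono) (simp_all add: power_divide)
  finally show ?thesis by (simp add: power_divide)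
qed

lemma rectangle_count_exponent_le:
  assumes "1 \<le> d" "1 \<le> (c::nat)" "e = 12 * (d + 2) * (2 * c + 3) + 1"
  shows "2 * (e + 2 * (e + d + 3) + 2) + 4 \<le> 1110 * d * c"
proof -
  have "d \<le> d * c" "c \<le> d * c" "1 \<le> d * c" using assms by simp_all
  moreover have "2 * (e + 2 * (e + d + 3) + 2) + 4 = 144 * (d * c) + 220 * d + 288 * c + 458"
    using assms(3) by (simp add: algebra_simps)
  ultimately show ?thesis by linarith
qed

lemma prob_one_Nil:
  assumes "qprotocol n N ka [] q"
  shows "prob_one n N ka [] q x y = of_bool (init_basis n ka x y q)"
proof -
  have "init_basis n ka x y \<in> local_basis {0..<N}"
    using assms by (auto simp: qprotocol_def init_basis_def local_basis_def)
  moreover have "prob_one n N ka [] q x y = (\<Sum>z\<in>local_basis {0..<N}.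
      if z = init_basis n ka x y then of_bool (init_basis n ka x y q) else 0)"
    unfolding prob_one_def by (intro sum.cong refl) (simp add: init_state_def)
  ultimately show ?thesis
    by (simp add: finite_local_basis)
qed

lemma rect_approx_Nil:
  assumes qp: "qprotocol n N ka [] q" and f: "computes_13 n N ka [] q f"
  shows "\<exists>\<alpha> \<R> w. rect_approx n f d \<alpha> \<R> w \<and> card \<R> \<le> 1"
proof -
  define A0 where "A0 = {x \<in> words n. q < n \<longrightarrow> x ! q}"
  define B0 where "B0 = {y \<in> words n. \<not> q < n \<longrightarrow> ka \<le> q \<and> q < ka + n \<and> y ! (q - ka)}"
  have "f x y \<longleftrightarrow> (x, y) \<in> A0 \<times> B0" if "x \<in> words n" "y \<in> words n" for x y
  proof -
    have "if f x y then 2/3 \<le> prob_one n N ka [] q x y else prob_one n N ka [] q x y \<le> 1/3"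
      using f that unfolding computes_13_def words_def by blast
    then have "f x y \<longleftrightarrow> init_basis n ka x y q"
      by (cases "f x y"; cases "init_basis n ka x y q") (simp_all add: prob_one_Nil[OF qp])
    also have "\<dots> \<longleftrightarrow> (x, y) \<in> A0 \<times> B0"
      using qp that by (auto simp: init_basis_def A0_def B0_def qprotocol_def)
    finally show ?thesis .
  qed
  then have "rect_sum {A0 \<times> B0} (\<lambda>R. 1) x y = of_bool (f x y)"
    if "x \<in> words n" "y \<in> words n" for x y
    using that by (simp add: rect_sum_def)
  moreover have "is_rectangle n (A0 \<times> B0)"
    by (rule is_rectangle_words) (auto simp: A0_def B0_def)
  ultimately show ?thesis
    by (intro exI[of _ 1] exI[of _ "{A0 \<times> B0}"] exI[of _ "\<lambda>R. 1"])
      (simp add: rect_approx_def gap_value_of_bool)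
qed

lemma rect_approx_protocol:
  assumes d: "1 \<le> d" and c: "1 \<le> length rs"
    and qp: "qprotocol n N ka rs q" and f: "computes_13 n N ka rs q f"
  shows "\<exists>\<alpha> \<R> w. rect_approx n f d \<alpha> \<R> w \<and> card \<R> \<le> 2 ^ (1110 * d * length rs)"
proof -
  let ?c = "length rs"
  (* h is chosen so that (8/9)^h <= eps, and L so that the rounding error 2 * 2^e / L is eps. *)
  define P where "P = prob_one n N ka rs q"
  define h where "h = 6 * (d + 2)"
  define \<epsilon> :: real where "\<epsilon> = 1 / 2 ^ (d + 2)"
  define e where "e = 2 * h * (2 * ?c + 3) + 1"
  define L :: nat where "L = 2 ^ (e + d + 3)"
  define r where "r x y = 2 * \<epsilon> * 1 + (1 - 4 * \<epsilon>) * majority_prob (2 * h) (P x y)" for x y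
  have \<epsilon>: "(8/9) ^ h \<le> \<epsilon>" "\<epsilon> \<le> 1/8" "4 * \<epsilon> = 2 powr (- real d)" "0 < \<epsilon>"
    using eight_ninths_power_le[of d] d power_increasing[of 3 "d + 2" "2::real"]
    by (auto simp: h_def \<epsilon>_def powr_minus powr_realpow power_add divide_simps)
  have exponent: "e - 1 = 2 * h * (2 * ?c + 1 + 2)" by (simp add: e_def algebra_simps)
  have "sum_of_products (2 ^ (e - 1)) (\<lambda>x y. majority_prob (2 * h) (P x y))"
    unfolding P_def exponent by (rule sum_of_products_majority_prob_pow2[OF sum_of_products_prob_one[OF qp]])
  then have "sum_of_products (1 + 2 ^ (e - 1)) r"
    unfolding r_def[abs_def] using \<epsilon>(2,4)
    by (intro sum_of_products_add sum_of_products_scale sum_of_products_one) auto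
  then have "sum_of_products (2 ^ e) r"
    by (rule sum_of_products_mono) (simp add: e_def)
  then obtain J :: "(nat \<times> (nat \<times> bool) \<times> (nat \<times> bool)) set" and A B \<sigma> where
    J: "finite J" "card J \<le> 4 * 2 ^ e * L\<^sup>2" "\<forall>j\<in>J. \<sigma> j = 1 \<or> \<sigma> j = -1" and
    close: "\<forall>x y. \<bar>r x y - (\<Sum>j\<in>J. \<sigma> j * of_bool (x \<in> A j) * of_bool (y \<in> B j)) / (real L)\<^sup>2\<bar>
              \<le> 2 * real (2 ^ e) / real L"
    using sum_of_products_approx_by_indicators[of "2 ^ e" r L] by (auto simp: L_def)
  have err: "2 * real (2 ^ e) / real L = \<epsilon>"
    by (simp add: L_def \<epsilon>_def power_add)
  have gap: "\<forall>x\<in>words n. \<forall>y\<in>words n.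
      gap_value d (f x y) ((\<Sum>j\<in>J. \<sigma> j * of_bool (x \<in> A j) * of_bool (y \<in> B j)) / (real L)\<^sup>2)"
  proof (intro ballI)
    fix x y assume xy: "x \<in> words n" "y \<in> words n"
    have P01: "0 \<le> P x y" "P x y \<le> 1"
      using prob_one_bounds[OF qp] by (simp_all add: P_def)
    have "if f x y then 2/3 \<le> P x y else P x y \<le> 1/3"
      using f xy unfolding computes_13_def words_def P_def by blast
    then have "if f x y then 1 - 3 * \<epsilon> \<le> r x y \<and> r x y \<le> 1 - 2 * \<epsilon>
        else 2 * \<epsilon> \<le> r x y \<and> r x y \<le> 3 * \<epsilon>"
      unfolding r_def mult_1_right by (rule shifted_majority_prob_bounds[OF P01 _ \<epsilon>(1,2)])
    moreover have "\<bar>r x y - (\<Sum>j\<in>J. \<sigma> j * of_bool (x \<in> A j) * of_bool (y \<in> B j)) / (real L)\<^sup>2\<bar> \<le> \<epsilon>"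
      using close err by simp
    ultimately show "gap_value d (f x y)
        ((\<Sum>j\<in>J. \<sigma> j * of_bool (x \<in> A j) * of_bool (y \<in> B j)) / (real L)\<^sup>2)"
      using \<epsilon>(3) by (rule gap_value_near)
  qed
  obtain \<alpha> \<R> w where "rect_approx n f d \<alpha> \<R> w" "card \<R> \<le> 16 * card J ^ 2"
    using rect_approx_of_signed_indicators[OF J(1,3) _ gap] by (auto simp: L_def)
  moreover have "16 * card J ^ 2 \<le> 2 ^ (2 * (e + 2 * (e + d + 3) + 2) + 4)"
  proof -
    have pow: "(4::nat) * 2 ^ a * (2 ^ b)\<^sup>2 = 2 ^ (a + 2 * b + 2)" "16 * ((2::nat) ^ a)\<^sup>2 = 2 ^ (2 * a + 4)"
      for a b by (simp_all add: power_add power_mult mult.commute)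
    have "card J \<le> 2 ^ (e + 2 * (e + d + 3) + 2)" using J(2) unfolding L_def by (simp only: pow)
    then have "16 * card J ^ 2 \<le> 16 * (2 ^ (e + 2 * (e + d + 3) + 2))\<^sup>2" by (simp add: power_mono)
    then show ?thesis by (simp only: pow)
  qed
  moreover have "2 * (e + 2 * (e + d + 3) + 2) + 4 \<le> 1110 * d * ?c"
    by (rule rectangle_count_exponent_le[OF d c]) (simp add: e_def h_def)
  ultimately show ?thesis
    by (meson order_trans power_increasing one_le_numeral)
qed

lemma rect_approx_from_protocol:
  assumes "1 \<le> d" "qprotocol n N ka rs q" "computes_13 n N ka rs q f"
  shows "\<exists>\<alpha> \<R> w. rect_approx n f d \<alpha> \<R> w \<and> card \<R> \<le> 2 ^ (1110 * d * length rs)"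
proof (cases "rs = []")
  case True
  then show ?thesis using rect_approx_Nil assms(2,3) by simp
next
  case False
  then show ?thesis using rect_approx_protocol[OF assms(1) _ assms(2,3)] by (simp add: Suc_le_eq)
qed

theorem lemma3p3:
  "\<exists>K::real. K > 0 \<and>
    (\<forall>(n::nat) (f::bool list \<Rightarrow> bool list \<Rightarrow> bool) (d::nat) (c::nat) N ka rs q.
      d \<ge> 1 \<longrightarrow> qprotocol n N ka rs q \<longrightarrow> length rs = c \<longrightarrow> computes_13 n N ka rs q f \<longrightarrow>
      (\<exists>(\<alpha>::real) (\<R>::(bool list \<times> bool list) set set) (w::(bool list \<times> bool list) set \<Rightarrow> real).
         0 \<le> \<alpha> \<and> \<alpha> \<le> 1 \<and> finite \<R> \<and> real (card \<R>) \<le> 2 powr (K * real d * real c) \<and>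
         (\<forall>R\<in>\<R>. is_rectangle n R \<and> (w R = \<alpha> \<or> w R = - \<alpha>)) \<and>
         (\<forall>x y. length x = n \<longrightarrow> length y = n \<longrightarrow>
            (let s = (\<Sum>R\<in>\<R>. w R * (if (x, y) \<in> R then 1 else 0)) in
             (if f x y then 1 - 2 powr (- real d) \<le> s \<and> s \<le> 1
              else 0 \<le> s \<and> s \<le> 2 powr (- real d))))))"
proof (rule exI[of _ 1110], intro conjI allI impI)
  fix n f and d c :: nat and N ka rs q
  assume "1 \<le> d" "qprotocol n N ka rs q" "length rs = c" "computes_13 n N ka rs q f"
  then obtain \<alpha> \<R> w where approx: "rect_approx n f d \<alpha> \<R> w" and card: "card \<R> \<le> 2 ^ (1110 * d * c)"
    using rect_approx_from_protocol by blast
  have "real (card \<R>) \<le> 2 ^ (1110 * d * c)"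
    using card by (metis of_nat_le_iff of_nat_numeral of_nat_power)
  also have "\<dots> = 2 powr (1110 * real d * real c)"
    by (simp add: powr_realpow[symmetric])
  finally have "real (card \<R>) \<le> 2 powr (1110 * real d * real c)" .
  with approx show "\<exists>\<alpha> \<R> w. 0 \<le> \<alpha> \<and> \<alpha> \<le> 1 \<and> finite \<R> \<and> real (card \<R>) \<le> 2 powr (1110 * real d * real c) \<and>
         (\<forall>R\<in>\<R>. is_rectangle n R \<and> (w R = \<alpha> \<or> w R = - \<alpha>)) \<and>
         (\<forall>x y. length x = n \<longrightarrow> length y = n \<longrightarrow>
            (let s = (\<Sum>R\<in>\<R>. w R * (if (x, y) \<in> R then 1 else 0)) in
             (if f x y then 1 - 2 powr (- real d) \<le> s \<and> s \<le> 1
              else 0 \<le> s \<and> s \<le> 2 powr (- real d))))"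
    unfolding rect_approx_def gap_value_def rect_sum_def words_def Let_def
    by (intro exI[of _ \<alpha>] exI[of _ \<R>] exI[of _ w]) auto
qed simp

end
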